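(* Let $W \subset \mathbb{R}^2$ be the Warsaw Circle. Then the zeroth Milnor-Thurston homology group $\mathcal{H}_0(W)$, equipped with the Berlanga topology, is not a Hausdorff space.
   Context: The Warsaw Circle $W \subset \mathbb{R}^2$ is the union of: the portion of the topologist's sine curve $\{(x,y) : y = \sin(1/x),\ x>0\}$ between the line $x=0$ and its rightmost minimum; the segment $\{(0,y) : -1 \leq y \leq 1\}$; and an arc (disjoint from the rest except at endpoints) joining $(0,-1)$ to that rightmost minimum. Milnor-Thurston (measure) homology: for a topological space $X$ and integer $k \geq 0$, let $C^0(\Delta^k, X)$ be the space of continuous maps from the standard $k$-simplex $\Delta^k$ to $X$, with the compact-open topology. $\mathcal{C}_k(X)$ is the real vector space of finite signed Borel measures on $C^0(\Delta^k,X)$ admitting a compact carrier (a set whose complement contains only Borel sets of measure zero). The boundary $\partial : \mathcal{C}_k(X) \to \mathcal{C}_{k-1}(X)$ is $\partial = \sum_{i=0}^k (-1)^i \partial_i$, where $\partial_i \mu$ is the image measure $A \mapsto \mu(\{\sigma : \sigma\circ\delta_i \in A\})$, with $\delta_i : \Delta^{k-1} \to \Delta^k$ the standard inclusion of the $i$-th face. Let $\mathcal{Z}_k(X)$ and $\mathcal{B}_k(X)$ be the cycles and boundaries; $\mathcal{H}_k(X) = \mathcal{Z}_k(X)/\mathcal{B}_k(X)$ is the Milnor-Thurston homology. Berlanga topology (for $X$ second countable and separable, such as $W$): for each continuous function $f : C^0(\Delta^k, X) \to \mathbb{R}$ consider the linear functional $\Lambda_f(\mu) = \int_{C^0(\Delta^k,X)}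 f\, d\mu$ on $\mathcal{C}_k(X)$; give $\mathcal{C}_k(X)$ the weakest topology making all $\Lambda_f$ continuous (a locally convex vector space topology). Give $\mathcal{Z}_k(X)$ and $\mathcal{B}_k(X)$ the subspace topologies and $\mathcal{H}_k(X)$ the quotient topology; this is the Berlanga topology on $\mathcal{H}_k(X)$. *)

theory Defs
  imports "HOL-Analysis.Analysis" "HOL-Homology.Homology"
begin

section \<open>The Warsaw circle (core part; the closing arc is a parameter)\<close>

text \<open>The rightmost minimum of sin(1/x) on x>0 is at x = 2/(3 pi).\<close>
definition warsaw_xmin :: real where "warsaw_xmin = 2 / (3 * pi)"

definition warsaw_sine_part :: "(real \<times> real) set" where
  "warsaw_sine_part = {(x, sin (1 / x)) | x. 0 < x \<and> x \<le> warsaw_xmin}"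

definition warsaw_segment :: "(real \<times> real) set" where
  "warsaw_segment = {(0, y) | y. -1 \<le> y \<and> y \<le> 1}"

definition compact_open_simplices :: "nat \<Rightarrow> 'a topology \<Rightarrow> ((nat \<Rightarrow> real) \<Rightarrow> 'a) topology" where
  "compact_open_simplices k X = topology_generated_by
     {{\<sigma>. singular_simplex k X \<sigma> \<and> \<sigma> ` K \<subseteq> U} | K U.
        compactin (subtopology (powertop_real UNIV) (standard_simplex k)) K \<and> openin X U}"

definition borel_sets_of :: "'b topology \<Rightarrow> 'b set set" where
  "borel_sets_of T = sigma_sets (topspace T) {U. openin T U}"

text \<open>A finite signed Borel measure, represented as a real-valued set function which is
  countably additive on Borel sets and (by normalisation) zero on non-Borel sets.\<close>
definition finite_signed_borel_measure :: "'b topology \<Rightarrow> ('b set \<Rightarrow> real) \<Rightarrow> bool" where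
  "finite_signed_borel_measure T \<mu> \<longleftrightarrow>
     (\<forall>A. A \<notin> borel_sets_of T \<longrightarrow> \<mu> A = 0) \<and>
     (\<forall>A :: nat \<Rightarrow> 'b set. range A \<subseteq> borel_sets_of T \<longrightarrow> disjoint_family A \<longrightarrow>
         (\<lambda>n. \<mu> (A n)) sums \<mu> (\<Union>n. A n))"

definition has_compact_carrier :: "'b topology \<Rightarrow> ('b set \<Rightarrow> real) \<Rightarrow> bool" where
  "has_compact_carrier T \<mu> \<longleftrightarrow>
     (\<exists>K. compactin T K \<and> (\<forall>B \<in> borel_sets_of T. B \<inter> K = {} \<longrightarrow> \<mu> B = 0))"

definition jordan_pos :: "'b topology \<Rightarrow> ('b set \<Rightarrow> real) \<Rightarrow> 'b set \<Rightarrow> real" where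
  "jordan_pos T \<mu> A = (SUP B \<in> {B \<in> borel_sets_of T. B \<subseteq> A}. \<mu> B)"

definition measure_of_fun :: "'b topology \<Rightarrow> ('b set \<Rightarrow> real) \<Rightarrow> 'b measure" where
  "measure_of_fun T \<nu> = measure_of (topspace T) (borel_sets_of T) (\<lambda>A. ennreal (\<nu> A))"

definition signed_integral :: "'b topology \<Rightarrow> ('b set \<Rightarrow> real) \<Rightarrow> ('b \<Rightarrow> real) \<Rightarrow> real" where
  "signed_integral T \<mu> f =
     integral\<^sup>L (measure_of_fun T (jordan_pos T \<mu>)) f
   - integral\<^sup>L (measure_of_fun T (jordan_pos T (\<lambda>A. - \<mu> A))) f"

type_synonym 'a mt_chain = "((nat \<Rightarrow> real) \<Rightarrow> 'a) set \<Rightarrow> real"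

definition mt_chains :: "nat \<Rightarrow> 'a topology \<Rightarrow> 'a mt_chain set" where
  "mt_chains k X = {\<mu>. finite_signed_borel_measure (compact_open_simplices k X) \<mu>
                      \<and> has_compact_carrier (compact_open_simplices k X) \<mu>}"

text \<open>Image measure under restriction to the i-th face (k \<ge> 1).\<close>
definition mt_face :: "nat \<Rightarrow> 'a topology \<Rightarrow> nat \<Rightarrow> 'a mt_chain \<Rightarrow> 'a mt_chain" where
  "mt_face k X i \<mu> = (\<lambda>A. if A \<in> borel_sets_of (compact_open_simplices (k - 1) X)
       then \<mu> {\<sigma> \<in> topspace (compact_open_simplices k X). singular_face k i \<sigma> \<in> A}
       else 0)"

definition mt_boundary :: "nat \<Rightarrow> 'a topology \<Rightarrow> 'a mt_chain \<Rightarrow> 'a mt_chain" where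
  "mt_boundary k X \<mu> = (\<lambda>A. \<Sum>i\<le>k. (-1) ^ i * mt_face k X i \<mu> A)"

text \<open>In degree 0 every chain is a cycle (the chain group in degree -1 is zero).\<close>
definition mt_cycles :: "nat \<Rightarrow> 'a topology \<Rightarrow> 'a mt_chain set" where
  "mt_cycles k X = {\<mu> \<in> mt_chains k X. k = 0 \<or> mt_boundary k X \<mu> = (\<lambda>A. 0)}"

definition mt_boundaries :: "nat \<Rightarrow> 'a topology \<Rightarrow> 'a mt_chain set" where
  "mt_boundaries k X = mt_boundary (Suc k) X ` mt_chains (Suc k) X"

definition berlanga_chains :: "nat \<Rightarrow> 'a topology \<Rightarrow> 'a mt_chain topology" where
  "berlanga_chains k X = topology_generated_by
     {{\<mu> \<in> mt_chains k X. signed_integral (compact_open_simplices k X) \<mu> f \<in> U} | f U.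
        continuous_map (compact_open_simplices k X) euclideanreal f \<and> open U}"

definition quotient_topology :: "'b topology \<Rightarrow> ('b \<Rightarrow> 'c) \<Rightarrow> 'c topology" where
  "quotient_topology T q = topology (\<lambda>U. U \<subseteq> q ` topspace T \<and> openin T {x \<in> topspace T. q x \<in> U})"

text \<open>Homology classes are the cosets mu + B_k inside Z_k.\<close>
definition mt_class :: "nat \<Rightarrow> 'a topology \<Rightarrow> 'a mt_chain \<Rightarrow> 'a mt_chain set" where
  "mt_class k X \<mu> = {\<nu> \<in> mt_cycles k X. (\<lambda>A. \<nu> A - \<mu> A) \<in> mt_boundaries k X}"

definition mt_homology_berlanga :: "nat \<Rightarrow> 'a topology \<Rightarrow> 'a mt_chain set topology" where
  "mt_homology_berlanga k X =
     quotient_topology (subtopology (berlanga_chains k X) (mt_cycles k X)) (mt_class k X)"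

end

theory Submission
  imports Defs
begin

text \<open>Let \<open>q\<^sub>j\<close> be the peaks of the sine curve, accumulating at the limit segment, and \<open>q\<close> the
  rightmost minimum. The 0-cycle \<open>\<mu> = \<Sum>\<^sub>j a\<^sub>j (\<delta>\<^bsub>q\<^sub>j\<^esub> - \<delta>\<^bsub>q\<^esub>)\<close> with \<open>a\<^sub>j = 1/(j+1) - 1/(j+2)\<close> is the
  limit, in the Berlanga topology, of its finite truncations, and every truncation is the boundary
  of the 1-chain of paths along the curve from \<open>q\<close> to the \<open>q\<^sub>j\<close>. So every neighbourhood of
  the class of \<open>\<mu>\<close> contains the class \<open>0\<close>.

  Yet \<open>\<mu>\<close> is not a boundary. Call the number of full oscillations of the curve between a point
  and the limit segment its depth. A path that avoids height \<open>1\<close> (or \<open>-1\<close>) changes depth by at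
  most one, so by uniform continuity and compactness the depths of the two vertices of the
  1-simplices in the compact carrier of a 1-chain \<open>\<nu>\<close> differ by a bounded amount. Hence
  \<open>\<partial>\<nu>\<close> gives summable masses to the sets of points of depth \<open>> k\<close>, while \<open>\<mu>\<close> gives
  them \<open>1/(k+1)\<close>.\<close>

lemma finite_signed_borel_measure_zero: "finite_signed_borel_measure T (\<lambda>A. 0)"
  by (simp add: finite_signed_borel_measure_def)

lemma finite_signed_borel_measure_diff:
  assumes "finite_signed_borel_measure T \<mu>" "finite_signed_borel_measure T \<nu>"
  shows "finite_signed_borel_measure T (\<lambda>A. \<mu> A - \<nu> A)"
  using assms unfolding finite_signed_borel_measure_def by (auto intro: sums_diff)

lemma finite_signed_borel_measure_add:
  assumes "finite_signed_borel_measure T \<mu>" "finite_signed_borel_measure T \<nu>"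
  shows "finite_signed_borel_measure T (\<lambda>A. \<mu> A + \<nu> A)"
  using assms unfolding finite_signed_borel_measure_def by (auto intro: sums_add)

lemma has_compact_carrier_zero: "has_compact_carrier T (\<lambda>A. 0)"
  unfolding has_compact_carrier_def by (rule exI[of _ "{}"]) auto

lemma has_compact_carrier_combine:
  assumes "has_compact_carrier T \<mu>" "has_compact_carrier T \<nu>"
    and "\<And>B. \<mu> B = 0 \<Longrightarrow> \<nu> B = 0 \<Longrightarrow> \<rho> B = 0"
  shows "has_compact_carrier T \<rho>"
proof -
  obtain K1 where K1: "compactin T K1" "\<forall>B \<in> borel_sets_of T. B \<inter> K1 = {} \<longrightarrow> \<mu> B = 0"
    using assms(1) unfolding has_compact_carrier_def by blast
  obtain K2 where K2: "compactin T K2" "\<forall>B \<in> borel_sets_of T. B \<inter> K2 = {} \<longrightarrow> \<nu> B = 0"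
    using assms(2) unfolding has_compact_carrier_def by blast
  show ?thesis
    unfolding has_compact_carrier_def using K1 K2 assms(3)
    by (intro exI[of _ "K1 \<union> K2"]) (auto simp: compactin_Un Int_Un_distrib)
qed

lemma mt_chains_zero: "(\<lambda>A. 0) \<in> mt_chains k X"
  by (simp add: mt_chains_def finite_signed_borel_measure_zero has_compact_carrier_zero)

lemma mt_chains_diff:
  "\<mu> \<in> mt_chains k X \<Longrightarrow> \<nu> \<in> mt_chains k X \<Longrightarrow> (\<lambda>A. \<mu> A - \<nu> A) \<in> mt_chains k X"
  unfolding mt_chains_def
  by (auto simp: finite_signed_borel_measure_diff intro: has_compact_carrier_combine[of _ \<mu> \<nu>])

lemma mt_chains_add:
  "\<mu> \<in> mt_chains k X \<Longrightarrow> \<nu> \<in> mt_chains k X \<Longrightarrow> (\<lambda>A. \<mu> A + \<nu> A) \<in> mt_chains k X"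
  unfolding mt_chains_def
  by (auto simp: finite_signed_borel_measure_add intro: has_compact_carrier_combine[of _ \<mu> \<nu>])

lemma mt_boundary_zero: "mt_boundary k X (\<lambda>A. 0) = (\<lambda>A. 0)"
  unfolding mt_boundary_def mt_face_def by auto

lemma mt_boundary_diff:
  "mt_boundary k X (\<lambda>A. \<mu> A - \<nu> A) = (\<lambda>A. mt_boundary k X \<mu> A - mt_boundary k X \<nu> A)"
  unfolding mt_boundary_def mt_face_def
  by (auto simp: sum_subtractf[symmetric] algebra_simps intro!: sum.cong)

lemma mt_boundary_add:
  "mt_boundary k X (\<lambda>A. \<mu> A + \<nu> A) = (\<lambda>A. mt_boundary k X \<mu> A + mt_boundary k X \<nu> A)"
  unfolding mt_boundary_def mt_face_def
  by (auto simp: sum.distrib[symmetric] algebra_simps intro!: sum.cong)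

lemma mt_boundaries_zero: "(\<lambda>A. 0) \<in> mt_boundaries k X"
  unfolding mt_boundaries_def
  by (rule image_eqI[where x="\<lambda>A. 0"]) (simp_all add: mt_boundary_zero mt_chains_zero)

lemma mt_boundaries_diff:
  assumes "\<alpha> \<in> mt_boundaries k X" "\<beta> \<in> mt_boundaries k X"
  shows "(\<lambda>A. \<alpha> A - \<beta> A) \<in> mt_boundaries k X"
proof -
  obtain \<mu> \<nu> where "\<mu> \<in> mt_chains (Suc k) X" "\<nu> \<in> mt_chains (Suc k) X"
    "\<alpha> = mt_boundary (Suc k) X \<mu>" "\<beta> = mt_boundary (Suc k) X \<nu>"
    using assms unfolding mt_boundaries_def by blast
  then show ?thesis unfolding mt_boundaries_def
    by (auto simp: mt_boundary_diff intro!: image_eqI[of _ _ "\<lambda>A. \<mu> A - \<nu> A"] mt_chains_diff)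
qed

lemma mt_boundaries_add:
  assumes "\<alpha> \<in> mt_boundaries k X" "\<beta> \<in> mt_boundaries k X"
  shows "(\<lambda>A. \<alpha> A + \<beta> A) \<in> mt_boundaries k X"
proof -
  obtain \<mu> \<nu> where "\<mu> \<in> mt_chains (Suc k) X" "\<nu> \<in> mt_chains (Suc k) X"
    "\<alpha> = mt_boundary (Suc k) X \<mu>" "\<beta> = mt_boundary (Suc k) X \<nu>"
    using assms unfolding mt_boundaries_def by blast
  then show ?thesis unfolding mt_boundaries_def
    by (auto simp: mt_boundary_add intro!: image_eqI[of _ _ "\<lambda>A. \<mu> A + \<nu> A"] mt_chains_add)
qed

lemma mt_class_eq_zero_iff:
  assumes "\<mu> \<in> mt_cycles k X"
  shows "mt_class k X \<mu> = mt_class k X (\<lambda>A. 0) \<longleftrightarrow> \<mu> \<in> mt_boundaries k X"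
proof
  assume "mt_class k X \<mu> = mt_class k X (\<lambda>A. 0)"
  moreover have "\<mu> \<in> mt_class k X \<mu>"
    using assms mt_boundaries_zero by (simp add: mt_class_def)
  ultimately show "\<mu> \<in> mt_boundaries k X" by (simp add: mt_class_def)
next
  assume \<mu>: "\<mu> \<in> mt_boundaries k X"
  have "(\<lambda>A. \<nu> A - \<mu> A) \<in> mt_boundaries k X \<longleftrightarrow> \<nu> \<in> mt_boundaries k X" for \<nu>
    using mt_boundaries_add[OF _ \<mu>, of "\<lambda>A. \<nu> A - \<mu> A"] mt_boundaries_diff[OF _ \<mu>, of \<nu>] by auto
  then show "mt_class k X \<mu> = mt_class k X (\<lambda>A. 0)" by (auto simp: mt_class_def)
qed

lemma istopology_quotient:
  "istopology (\<lambda>U. U \<subseteq> q ` topspace T \<and> openin T {x \<in> topspace T. q x \<in> U})"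
proof -
  have "{x \<in> topspace T. q x \<in> S \<inter> U} = {x \<in> topspace T. q x \<in> S} \<inter> {x \<in> topspace T. q x \<in> U}"
    for S U by auto
  moreover have "{x \<in> topspace T. q x \<in> \<Union>K} = (\<Union>S\<in>K. {x \<in> topspace T. q x \<in> S})" for K
    by auto
  ultimately show ?thesis unfolding istopology_def by auto
qed

lemma openin_quotient_topology:
  "openin (quotient_topology T q) U \<longleftrightarrow> U \<subseteq> q ` topspace T \<and> openin T {x \<in> topspace T. q x \<in> U}"
  unfolding quotient_topology_def by (simp add: topology_inverse'[OF istopology_quotient])

lemma topspace_quotient_topology: "topspace (quotient_topology T q) = q ` topspace T"
proof -
  have "openin (quotient_topology T q) (q ` topspace T)"
    unfolding openin_quotient_topology by (auto intro: back_subst[where P="openin T", OF openin_topspace])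
  then have "q ` topspace T \<subseteq> topspace (quotient_topology T q)" by (rule openin_subset)
  moreover have "topspace (quotient_topology T q) \<subseteq> q ` topspace T"
    unfolding topspace_def openin_quotient_topology by auto
  ultimately show ?thesis by blast
qed

lemma continuous_map_quotient_topology: "continuous_map T (quotient_topology T q) q"
  unfolding continuous_map_def openin_quotient_topology topspace_quotient_topology by blast

lemma not_Hausdorff_space_quotient_topology:
  assumes lim: "limitin T x l sequentially" and "\<And>n. q (x n) = c" "q l \<noteq> c"
  shows "\<not> Hausdorff_space (quotient_topology T q)"
proof
  assume Hausdorff: "Hausdorff_space (quotient_topology T q)"
  have "\<forall>\<^sub>F n in sequentially. x n \<in> topspace T"
    using lim by (simp add: limitin_def)
  then obtain n where "x n \<in> topspace T" by (meson eventually_sequentially order_refl)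
  then have "c \<in> topspace (quotient_topology T q)"
    using assms(2) by (metis image_eqI topspace_quotient_topology)
  then have "limitin (quotient_topology T q) (\<lambda>n. q (x n)) c sequentially"
    using assms(2) by simp
  moreover have "limitin (quotient_topology T q) (\<lambda>n. q (x n)) (q l) sequentially"
    using continuous_map_limit[OF continuous_map_quotient_topology lim] by (simp add: o_def)
  ultimately show False
    using limitin_Hausdorff_unique[OF _ _ _ Hausdorff] assms(3) by force
qed

lemma openin_subsets: "{S. openin T S} \<subseteq> Pow (topspace T)"
  using openin_subset by auto

lemma borel_sets_of_openin: "openin T S \<Longrightarrow> S \<in> borel_sets_of T"
  unfolding borel_sets_of_def by (auto intro: sigma_sets.Basic)

lemma borel_sets_of_subset: "A \<in> borel_sets_of T \<Longrightarrow> A \<subseteq> topspace T"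
  unfolding borel_sets_of_def using sigma_sets_into_sp[OF openin_subsets] by blast

lemma borel_sets_of_compl: "A \<in> borel_sets_of T \<Longrightarrow> topspace T - A \<in> borel_sets_of T"
  unfolding borel_sets_of_def by (rule sigma_sets.Compl)

lemma borel_sets_of_empty: "{} \<in> borel_sets_of T"
  unfolding borel_sets_of_def by (rule sigma_sets.Empty)

lemma borel_sets_of_topspace: "topspace T \<in> borel_sets_of T"
  using borel_sets_of_compl[OF borel_sets_of_empty] by simp

lemma borel_sets_of_UN: "(\<And>i::nat. A i \<in> borel_sets_of T) \<Longrightarrow> (\<Union>i. A i) \<in> borel_sets_of T"
  unfolding borel_sets_of_def by (rule sigma_sets.Union)

lemma borel_sets_of_Un: "A \<in> borel_sets_of T \<Longrightarrow> B \<in> borel_sets_of T \<Longrightarrow> A \<union> B \<in> borel_sets_of T"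
  unfolding borel_sets_of_def by (rule sigma_sets_Un)

lemma borel_sets_of_Diff:
  assumes "A \<in> borel_sets_of T" "B \<in> borel_sets_of T"
  shows "A - B \<in> borel_sets_of T"
proof -
  have "A - B = topspace T - ((topspace T - A) \<union> B)" using borel_sets_of_subset[OF assms(1)] by auto
  then show ?thesis using assms by (simp add: borel_sets_of_compl borel_sets_of_Un)
qed

lemma borel_sets_of_Int:
  assumes "A \<in> borel_sets_of T" "B \<in> borel_sets_of T"
  shows "A \<inter> B \<in> borel_sets_of T"
proof -
  have "A \<inter> B = A - (topspace T - B)" using borel_sets_of_subset[OF assms(1)] by auto
  then show ?thesis using assms by (simp add: borel_sets_of_compl borel_sets_of_Diff)
qed

lemma sigma_sets_borel_sets_of: "sigma_sets (topspace T) (borel_sets_of T) = borel_sets_of T"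
  unfolding borel_sets_of_def by (rule sigma_sets_sigma_sets_eq[OF openin_subsets])

lemma borel_sets_of_continuous_map_preimage:
  assumes f: "continuous_map T1 T2 f" and A: "A \<in> borel_sets_of T2"
  shows "{x \<in> topspace T1. f x \<in> A} \<in> borel_sets_of T1"
  using A unfolding borel_sets_of_def
proof (induction rule: sigma_sets.induct)
  case (Basic a) then show ?case using f by (auto simp: continuous_map_def intro: sigma_sets.Basic)
next
  case Empty then show ?case by (simp add: sigma_sets.Empty)
next
  case (Compl a)
  have "{x \<in> topspace T1. f x \<in> topspace T2 - a} = topspace T1 - {x \<in> topspace T1. f x \<in> a}"
    using continuous_map_image_subset_topspace[OF f] by auto
  then show ?case using Compl by (auto intro: sigma_sets.Compl)
next
  case (Union a)
  have "{x \<in> topspace T1. f x \<in> (\<Union>i. a i)} = (\<Union>i. {x \<in> topspace T1. f x \<in> a i})" by auto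
  then show ?case using Union by (auto intro: sigma_sets.Union)
qed

lemma finite_signed_borel_measure_sums:
  assumes "finite_signed_borel_measure T \<nu>" "range A \<subseteq> borel_sets_of T" "disjoint_family A"
  shows "(\<lambda>n. \<nu> (A n)) sums \<nu> (\<Union>n. A n)"
  using assms unfolding finite_signed_borel_measure_def by blast

lemma finite_signed_borel_measure_empty:
  assumes "finite_signed_borel_measure T \<nu>"
  shows "\<nu> {} = 0"
proof -
  have "(\<lambda>n::nat. \<nu> {}) sums \<nu> {}"
    using finite_signed_borel_measure_sums[OF assms, of "\<lambda>_. {}"]
    by (simp add: borel_sets_of_empty disjoint_family_on_def)
  then show ?thesis
    using LIMSEQ_const_iff summable_LIMSEQ_zero sums_summable by blast
qed

lemma finite_signed_borel_measure_Un:
  assumes \<nu>: "finite_signed_borel_measure T \<nu>"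
    and AB: "A \<in> borel_sets_of T" "B \<in> borel_sets_of T" "A \<inter> B = {}"
  shows "\<nu> (A \<union> B) = \<nu> A + \<nu> B"
proof -
  define F where "F = (\<lambda>n::nat. if n = 0 then A else if n = 1 then B else {})"
  have "(\<lambda>n. \<nu> (F n)) sums \<nu> (\<Union>n. F n)"
    using AB by (intro finite_signed_borel_measure_sums[OF \<nu>])
      (auto simp: F_def borel_sets_of_empty disjoint_family_on_def)
  moreover have "(\<Union>n. F n) = A \<union> B"
    using UN_upper[of 0 UNIV F] UN_upper[of 1 UNIV F] by (auto simp: F_def split: if_splits)
  moreover have "(\<lambda>n. \<nu> (F n)) sums (\<Sum>n\<in>{0,1}. \<nu> (F n))"
    by (rule sums_finite) (auto simp: F_def finite_signed_borel_measure_empty[OF \<nu>])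
  ultimately show ?thesis by (simp add: sums_unique2 F_def)
qed

lemma finite_signed_borel_measure_UN_finite_support:
  assumes \<nu>: "finite_signed_borel_measure T \<nu>"
    and A: "\<And>r. A r \<in> borel_sets_of T" "disjoint_family A" "\<And>r. (M::nat) < r \<Longrightarrow> \<nu> (A r) = 0"
  shows "\<nu> (\<Union>r. A r) = (\<Sum>r\<le>M. \<nu> (A r))"
proof -
  have "(\<lambda>r. \<nu> (A r)) sums \<nu> (\<Union>r. A r)"
    using A by (intro finite_signed_borel_measure_sums[OF \<nu>]) auto
  moreover have "(\<lambda>r. \<nu> (A r)) sums (\<Sum>r\<le>M. \<nu> (A r))"
    using A(3) by (intro sums_finite) auto
  ultimately show ?thesis using sums_unique2 by blast
qed

lemma summable_signed_measure_bands:
  assumes \<nu>: "finite_signed_borel_measure T \<nu>"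
    and carrier: "\<And>B. B \<in> borel_sets_of T \<Longrightarrow> B \<inter> K = {} \<Longrightarrow> \<nu> B = 0"
    and borel: "\<And>P. {\<sigma> \<in> topspace T. P (a \<sigma>) (b \<sigma>)} \<in> borel_sets_of T"
    and bounded: "\<And>\<sigma>. \<sigma> \<in> K \<Longrightarrow> b \<sigma> \<le> a \<sigma> + (M::nat)"
  shows "summable (\<lambda>k. \<nu> {\<sigma> \<in> topspace T. a \<sigma> \<le> k \<and> k < b \<sigma>})"
proof -
  define band where "band r k = {\<sigma> \<in> topspace T. a \<sigma> + r = k \<and> k < b \<sigma>}" for r k
  have band_borel: "band r k \<in> borel_sets_of T" for r k
    unfolding band_def by (rule borel[of "\<lambda>x y. x + r = k \<and> k < y"])
  have "\<nu> (band r k) = 0" if "M < r" for r k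
    using bounded that by (intro carrier band_borel) (force simp: band_def)
  then have "\<nu> (\<Union>r. band r k) = (\<Sum>r\<le>M. \<nu> (band r k))" for k
    using band_borel
    by (intro finite_signed_borel_measure_UN_finite_support[OF \<nu>]) (auto simp: disjoint_family_on_def band_def)
  moreover have "(\<Union>r. band r k) = {\<sigma> \<in> topspace T. a \<sigma> \<le> k \<and> k < b \<sigma>}" for k
  proof (intro equalityI subsetI)
    fix \<sigma> assume "\<sigma> \<in> {\<sigma> \<in> topspace T. a \<sigma> \<le> k \<and> k < b \<sigma>}"
    then have "\<sigma> \<in> band (k - a \<sigma>) k" by (auto simp: band_def)
    then show "\<sigma> \<in> (\<Union>r. band r k)" by blast
  qed (auto simp: band_def)
  moreover have "summable (\<lambda>k. \<nu> (band r k))" for r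
    using band_borel
    by (intro sums_summable[OF finite_signed_borel_measure_sums[OF \<nu>]])
      (auto simp: disjoint_family_on_def band_def)
  ultimately show ?thesis by (simp add: summable_sum)
qed

text \<open>Only the \<open>\<sigma>\<close>-algebra of this measure is used; the measure itself is a dummy.\<close>

definition borel_space_of :: "'b topology \<Rightarrow> 'b measure" where
  "borel_space_of T = measure_of (topspace T) {S. openin T S} (\<lambda>_. 0)"

lemma sets_borel_space_of[simp]: "sets (borel_space_of T) = borel_sets_of T"
  unfolding borel_space_of_def borel_sets_of_def by (rule sets_measure_of[OF openin_subsets])

lemma space_borel_space_of[simp]: "space (borel_space_of T) = topspace T"
  unfolding borel_space_of_def by (rule space_measure_of[OF openin_subsets])

lemma continuous_map_borel_measurable:
  assumes "continuous_map T euclideanreal f"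
  shows "f \<in> borel_measurable (borel_space_of T)"
proof (rule borel_measurableI)
  fix S :: "real set" assume "open S"
  then have "openin T {x \<in> topspace T. f x \<in> S}"
    using assms by (simp add: continuous_map_def)
  moreover have "f -` S \<inter> space (borel_space_of T) = {x \<in> topspace T. f x \<in> S}" by auto
  ultimately show "f -` S \<inter> space (borel_space_of T) \<in> sets (borel_space_of T)"
    by (simp add: borel_sets_of_openin)
qed

text \<open>The measure \<open>\<Sum>\<^sub>j a\<^sub>j \<delta>\<^bsub>P j\<^esub>\<close>.\<close>

definition point_masses :: "'b topology \<Rightarrow> (nat \<Rightarrow> 'b) \<Rightarrow> (nat \<Rightarrow> real) \<Rightarrow> 'b measure" where
  "point_masses T P a = distr (density (count_space UNIV) (\<lambda>j. ennreal (a j))) (borel_space_of T) P"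

lemma sets_point_masses[simp]: "sets (point_masses T P a) = borel_sets_of T"
  by (simp add: point_masses_def)

lemma space_point_masses[simp]: "space (point_masses T P a) = topspace T"
  by (simp add: point_masses_def)

lemma measurable_point_masses_points:
  "(\<And>j. P j \<in> topspace T) \<Longrightarrow>
     P \<in> measurable (density (count_space UNIV) (\<lambda>j. ennreal (a j))) (borel_space_of T)"
  by (simp add: Pi_iff)

lemma emeasure_point_masses:
  assumes P: "\<And>j. P j \<in> topspace T" and a: "\<And>j. 0 \<le> a j" "summable a"
    and A: "A \<in> borel_sets_of T"
  shows "emeasure (point_masses T P a) A = ennreal (suminf (\<lambda>j. a j * indicator A (P j)))"
proof -
  have s: "summable (\<lambda>j. a j * indicator A (P j))"
    by (rule summable_comparison_test[OF _ a(2)]) (auto simp: a indicator_def)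
  have "emeasure (point_masses T P a) A
      = emeasure (density (count_space UNIV) (\<lambda>j. ennreal (a j))) (P -` A)"
    unfolding point_masses_def using A
    by (subst emeasure_distr[OF measurable_point_masses_points[OF P]]) auto
  also have "\<dots> = (\<integral>\<^sup>+j. ennreal (a j) * indicator (P -` A) j \<partial>count_space UNIV)"
    by (subst emeasure_density) (auto simp: nn_integral_count_space_indicator)
  also have "\<dots> = suminf (\<lambda>j. ennreal (a j * indicator A (P j)))"
    by (subst nn_integral_count_space_nat) (auto simp: indicator_def intro!: suminf_cong)
  also have "\<dots> = ennreal (suminf (\<lambda>j. a j * indicator A (P j)))"
    by (rule suminf_ennreal2) (auto simp: a s)
  finally show ?thesis .
qed

lemma finite_measure_point_masses:
  assumes "\<And>j. P j \<in> topspace T" "\<And>j. 0 \<le> a j" "summable a"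
  shows "finite_measure (point_masses T P a)"
  by (rule finite_measureI) (simp add: emeasure_point_masses[OF assms borel_sets_of_topspace])

lemma measure_point_masses:
  assumes P: "\<And>j. P j \<in> topspace T" and a: "\<And>j. 0 \<le> a j" "summable a"
    and A: "A \<in> borel_sets_of T"
  shows "measure (point_masses T P a) A = suminf (\<lambda>j. a j * indicator A (P j))"
proof -
  have "0 \<le> suminf (\<lambda>j. a j * indicator A (P j))"
    by (rule suminf_nonneg) (auto intro: summable_comparison_test[OF _ a(2)] simp: a indicator_def)
  then show ?thesis unfolding measure_def using emeasure_point_masses[OF P a A] by simp
qed

lemma integral_point_masses:
  assumes P: "\<And>j. P j \<in> topspace T" and a: "\<And>j. 0 \<le> a j" "summable a"
    and f: "f \<in> borel_measurable (borel_space_of T)" and s: "summable (\<lambda>j. a j * \<bar>f (P j)\<bar>)"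
  shows "integral\<^sup>L (point_masses T P a) f = suminf (\<lambda>j. a j * f (P j))"
proof -
  have "integral\<^sup>L (point_masses T P a) f
      = integral\<^sup>L (density (count_space UNIV) (\<lambda>j. ennreal (a j))) (\<lambda>j. f (P j))"
    unfolding point_masses_def by (rule integral_distr[OF measurable_point_masses_points[OF P] f])
  also have "\<dots> = integral\<^sup>L (count_space UNIV) (\<lambda>j. a j *\<^sub>R f (P j))"
    by (rule integral_density) (auto simp: a)
  also have "\<dots> = suminf (\<lambda>j. a j * f (P j))"
    by (subst integral_count_space_nat) (auto simp: integrable_count_space_nat_iff abs_mult a s)
  finally show ?thesis .
qed

text \<open>Set to zero off the Borel sets, as \<open>finite_signed_borel_measure\<close> requires.\<close>

definition signed_measure_of :: "'b topology \<Rightarrow> 'b measure \<Rightarrow> 'b set \<Rightarrow> real" where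
  "signed_measure_of T M = (\<lambda>A. if A \<in> borel_sets_of T then measure M A else 0)"

lemma finite_signed_borel_measure_signed_measure_of:
  assumes M: "finite_measure M" "sets M = borel_sets_of T"
  shows "finite_signed_borel_measure T (signed_measure_of T M)"
  unfolding finite_signed_borel_measure_def
proof (intro conjI allI impI)
  interpret finite_measure M by fact
  fix A :: "nat \<Rightarrow> _" assume A: "range A \<subseteq> borel_sets_of T" "disjoint_family A"
  then have "(\<Union>n. A n) \<in> borel_sets_of T" by (intro borel_sets_of_UN) auto
  moreover have "(\<lambda>n. measure M (A n)) sums measure M (\<Union>n. A n)"
    using A M by (intro finite_measure_UNION) auto
  ultimately show "(\<lambda>n. signed_measure_of T M (A n)) sums signed_measure_of T M (\<Union>n. A n)"
    using A by (simp add: signed_measure_of_def image_subset_iff)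
qed (simp add: signed_measure_of_def)

text \<open>For mutually singular \<open>M1\<close>, \<open>M2\<close> (\<open>M1\<close> lives off \<open>Z\<close>, \<open>M2\<close> on \<open>Z\<close>), \<open>M1 - M2\<close> is the
  Jordan decomposition, so the signed integral is the difference of the two integrals.\<close>

lemma jordan_pos_measure_diff:
  assumes M1: "finite_measure M1" "sets M1 = borel_sets_of T"
    and M2: "finite_measure M2" "sets M2 = borel_sets_of T" "space M2 = topspace T"
    and Z: "Z \<in> borel_sets_of T" "measure M1 Z = 0" "measure M2 (topspace T - Z) = 0"
    and A: "A \<in> borel_sets_of T"
  shows "jordan_pos T (\<lambda>A. signed_measure_of T M1 A - signed_measure_of T M2 A) A = measure M1 A"
  unfolding jordan_pos_def
proof (rule cSup_eq_maximum)
  interpret m1: finite_measure M1 by fact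
  interpret m2: finite_measure M2 by fact
  have "measure M1 (A \<inter> Z) \<le> measure M1 Z"
    by (rule m1.finite_measure_mono) (use A Z M1 in \<open>auto simp: borel_sets_of_Int\<close>)
  then have "measure M1 (A \<inter> Z) = 0" using Z measure_nonneg[of M1 "A \<inter> Z"] by linarith
  moreover have "measure M1 ((A - Z) \<union> (A \<inter> Z)) = measure M1 (A - Z) + measure M1 (A \<inter> Z)"
    by (rule m1.finite_measure_Union) (use A Z M1 in \<open>auto simp: borel_sets_of_Int borel_sets_of_Diff\<close>)
  moreover have "(A - Z) \<union> (A \<inter> Z) = A" by auto
  ultimately have M1_AZ: "measure M1 (A - Z) = measure M1 A" by simp
  have "measure M2 (A - Z) \<le> measure M2 (topspace T - Z)"
    by (rule m2.finite_measure_mono) (use borel_sets_of_subset[OF A] Z M2 in \<open>auto simp: borel_sets_of_compl\<close>)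
  then have "measure M2 (A - Z) = 0" using Z measure_nonneg[of M2 "A - Z"] by linarith
  then show "measure M1 A \<in> (\<lambda>A. signed_measure_of T M1 A - signed_measure_of T M2 A) `
      {B \<in> borel_sets_of T. B \<subseteq> A}"
    using A Z M1_AZ
    by (auto simp: signed_measure_of_def borel_sets_of_Diff intro!: image_eqI[of _ _ "A - Z"])
  fix x assume "x \<in> (\<lambda>A. signed_measure_of T M1 A - signed_measure_of T M2 A) `
      {B \<in> borel_sets_of T. B \<subseteq> A}"
  then obtain B where B: "B \<in> borel_sets_of T" "B \<subseteq> A" "x = measure M1 B - measure M2 B"
    by (auto simp: signed_measure_of_def)
  have "measure M1 B \<le> measure M1 A" using B A M1 by (intro m1.finite_measure_mono) auto
  then show "x \<le> measure M1 A" using B measure_nonneg[of M2 B] by linarith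
qed

lemma measure_of_fun_jordan_pos:
  assumes M1: "finite_measure M1" "sets M1 = borel_sets_of T" "space M1 = topspace T"
    and M2: "finite_measure M2" "sets M2 = borel_sets_of T" "space M2 = topspace T"
    and Z: "Z \<in> borel_sets_of T" "measure M1 Z = 0" "measure M2 (topspace T - Z) = 0"
  shows "measure_of_fun T (jordan_pos T (\<lambda>A. signed_measure_of T M1 A - signed_measure_of T M2 A)) = M1"
proof -
  interpret finite_measure M1 by fact
  have "measure_of_fun T (jordan_pos T (\<lambda>A. signed_measure_of T M1 A - signed_measure_of T M2 A))
      = measure_of (topspace T) (borel_sets_of T) (emeasure M1)"
    unfolding measure_of_fun_def
    by (rule measure_of_eq)
      (auto simp: sigma_sets_borel_sets_of jordan_pos_measure_diff[OF M1(1,2) M2 Z] emeasure_eq_measure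
        dest: borel_sets_of_subset)
  also have "\<dots> = M1" using measure_of_of_measure[of M1] M1 by simp
  finally show ?thesis .
qed

lemma signed_integral_measure_diff:
  assumes M1: "finite_measure M1" "sets M1 = borel_sets_of T" "space M1 = topspace T"
    and M2: "finite_measure M2" "sets M2 = borel_sets_of T" "space M2 = topspace T"
    and Z: "Z \<in> borel_sets_of T" "measure M1 Z = 0" "measure M2 (topspace T - Z) = 0"
  shows "signed_integral T (\<lambda>A. signed_measure_of T M1 A - signed_measure_of T M2 A) f
       = integral\<^sup>L M1 f - integral\<^sup>L M2 f"
proof -
  have Z': "topspace T - Z \<in> borel_sets_of T" "measure M2 (topspace T - Z) = 0"
      "measure M1 (topspace T - (topspace T - Z)) = 0"
    using Z borel_sets_of_subset[OF Z(1)] by (auto simp: borel_sets_of_compl Diff_Diff_Int Int_absorb1)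
  have "(\<lambda>A. - (signed_measure_of T M1 A - signed_measure_of T M2 A))
      = (\<lambda>A. signed_measure_of T M2 A - signed_measure_of T M1 A)"
    by auto
  then show ?thesis
    unfolding signed_integral_def
    using measure_of_fun_jordan_pos[OF M1 M2 Z] measure_of_fun_jordan_pos[OF M2 M1 Z'] by simp
qed

abbreviation simplex_space :: "nat \<Rightarrow> (nat \<Rightarrow> real) topology" where
  "simplex_space p \<equiv> subtopology (powertop_real UNIV) (standard_simplex p)"

lemma topspace_compact_open_simplices:
  "topspace (compact_open_simplices k X) = {\<sigma>. singular_simplex k X \<sigma>}"
proof -
  have "{\<sigma>. singular_simplex k X \<sigma> \<and> \<sigma> ` {} \<subseteq> topspace X} \<in>
     {{\<sigma>. singular_simplex k X \<sigma> \<and> \<sigma> ` K \<subseteq> U} | K U.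
        compactin (simplex_space k) K \<and> openin X U}"
    by blast
  then show ?thesis unfolding compact_open_simplices_def by auto
qed

lemma openin_compact_open_simplices:
  assumes "compactin (simplex_space k) K" "openin X U"
  shows "openin (compact_open_simplices k X) {\<sigma>. singular_simplex k X \<sigma> \<and> \<sigma> ` K \<subseteq> U}"
  unfolding compact_open_simplices_def
  by (rule topology_generated_by_Basis) (use assms in blast)

lemma openin_compact_open_simplices_eval:
  assumes "v \<in> standard_simplex k" "openin X U"
  shows "openin (compact_open_simplices k X) {\<sigma> \<in> topspace (compact_open_simplices k X). \<sigma> v \<in> U}"
  using openin_compact_open_simplices[of k "{v}" X U] assms
  by (simp add: topspace_compact_open_simplices)

lemma limitin_topology_generated_by:
  assumes "l \<in> \<Union>S" "\<And>s. s \<in> S \<Longrightarrow> l \<in> s \<Longrightarrow> \<forall>\<^sub>F n in F. f n \<in> s"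
  shows "limitin (topology_generated_by S) f l F"
  unfolding limitin_def
proof (intro conjI allI impI)
  show "l \<in> topspace (topology_generated_by S)" using assms(1) by simp
  fix U assume "openin (topology_generated_by S) U \<and> l \<in> U"
  then have "generate_topology_on S U" "l \<in> U"
    by (auto dest: openin_topology_generated_by)
  then show "\<forall>\<^sub>F n in F. f n \<in> U"
  proof (induction rule: generate_topology_on.induct)
    case (Int a b) then show ?case by (auto intro: eventually_conj)
  next
    case (UN K)
    then obtain k where "k \<in> K" "l \<in> k" by blast
    with UN have "\<forall>\<^sub>F n in F. f n \<in> k" by blast
    then show ?case using \<open>k \<in> K\<close> by (auto elim: eventually_mono)
  qed (use assms(2) in auto)
qed

lemma continuous_map_simplical_face:
  assumes "1 \<le> p" "k \<le> p"
  shows "continuous_map (simplex_space (p - 1)) (simplex_space p) (simplical_face k)"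
proof -
  have "simplical_face k \<in> standard_simplex (p - 1) \<rightarrow> standard_simplex p"
    using assms simplical_face_in_standard_simplex by auto
  moreover have "continuous_map (simplex_space (p - 1)) euclideanreal (\<lambda>x. simplical_face k x i)" for i
  proof -
    have "continuous_map (powertop_real UNIV) euclideanreal
            (\<lambda>x. if i < k then x i else if i = k then 0 else x (i - 1))"
      by (auto intro: continuous_map_product_projection)
    then show ?thesis by (simp add: simplical_face_def continuous_map_from_subtopology)
  qed
  ultimately show ?thesis
    by (simp add: continuous_map_in_subtopology continuous_map_componentwise)
qed

lemma continuous_map_singular_face:
  assumes "1 \<le> p" "i \<le> p"
  shows "continuous_map (compact_open_simplices p X) (compact_open_simplices (p - 1) X)
           (singular_face p i)"
  unfolding compact_open_simplices_def[of "p - 1"]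
proof (rule continuous_on_generated_topo)
  fix G
  assume "G \<in> {{\<sigma>. singular_simplex (p - 1) X \<sigma> \<and> \<sigma> ` K \<subseteq> U} | K U.
               compactin (simplex_space (p - 1)) K \<and> openin X U}"
  then obtain K U where G: "G = {\<sigma>. singular_simplex (p - 1) X \<sigma> \<and> \<sigma> ` K \<subseteq> U}"
    and K: "compactin (simplex_space (p - 1)) K" and U: "openin X U" by blast
  have "K \<subseteq> standard_simplex (p - 1)" using compactin_subset_topspace[OF K] by simp
  then have "singular_face p i -` G \<inter> topspace (compact_open_simplices p X)
      = {\<sigma>. singular_simplex p X \<sigma> \<and> \<sigma> ` (simplical_face i ` K) \<subseteq> U}"
    using singular_simplex_singular_face[of p X _ i] assms
    by (auto simp: G topspace_compact_open_simplices singular_face_def image_subset_iff)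
  moreover have "compactin (simplex_space p) (simplical_face i ` K)"
    using image_compactin[OF K continuous_map_simplical_face[OF assms]] .
  ultimately show "openin (compact_open_simplices p X)
      (singular_face p i -` G \<inter> topspace (compact_open_simplices p X))"
    using openin_compact_open_simplices[OF _ U] by simp
next
  show "singular_face p i ` topspace (compact_open_simplices p X)
      \<subseteq> \<Union> {{\<sigma>. singular_simplex (p - 1) X \<sigma> \<and> \<sigma> ` K \<subseteq> U} | K U.
               compactin (simplex_space (p - 1)) K \<and> openin X U}"
  proof -
    have "singular_face p i ` topspace (compact_open_simplices p X)
        \<subseteq> topspace (compact_open_simplices (p - 1) X)"
      using singular_simplex_singular_face[of p X _ i] assms
      by (auto simp: topspace_compact_open_simplices)
    then show ?thesis by (simp add: compact_open_simplices_def)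
  qed
qed

definition simplex_vertex :: "nat \<Rightarrow> nat \<Rightarrow> real" where
  "simplex_vertex j = (\<lambda>i. if i = j then 1 else 0)"

definition const_simplex :: "'a \<Rightarrow> (nat \<Rightarrow> real) \<Rightarrow> 'a" where
  "const_simplex u = restrict (\<lambda>_. u) (standard_simplex 0)"

lemma simplex_vertex_in_standard_simplex: "j \<le> p \<Longrightarrow> simplex_vertex j \<in> standard_simplex p"
  by (auto simp: standard_simplex_def simplex_vertex_def)

lemma standard_simplex_0_eq: "standard_simplex 0 = {simplex_vertex 0}"
  by (simp add: standard_simplex_0 simplex_vertex_def)

lemma const_simplex_vertex [simp]: "const_simplex u (simplex_vertex 0) = u"
  by (simp add: const_simplex_def standard_simplex_0_eq)

lemma singular_simplex_const_simplex: "u \<in> topspace X \<Longrightarrow> singular_simplex 0 X (const_simplex u)"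
  unfolding singular_simplex_def const_simplex_def
  by (auto intro: continuous_map_eq[of _ _ "\<lambda>_. u"])

lemma const_simplex_in_compact_open_simplices:
  "u \<in> topspace X \<Longrightarrow> const_simplex u \<in> topspace (compact_open_simplices 0 X)"
  by (simp add: topspace_compact_open_simplices singular_simplex_const_simplex)

lemma compact_open_simplices_0_eq_const_simplex:
  assumes "\<tau> \<in> topspace (compact_open_simplices 0 X)"
  shows "\<tau> = const_simplex (\<tau> (simplex_vertex 0))"
proof
  fix x
  have "\<tau> \<in> extensional (standard_simplex 0)"
    using assms by (simp add: topspace_compact_open_simplices singular_simplex_def)
  then show "\<tau> x = const_simplex (\<tau> (simplex_vertex 0)) x"
    by (cases "x \<in> standard_simplex 0") (auto simp: const_simplex_def standard_simplex_0_eq extensional_def)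
qed

lemma simplical_face_simplex_vertex:
  "simplical_face 0 (simplex_vertex 0) = simplex_vertex 1"
  "simplical_face 1 (simplex_vertex 0) = simplex_vertex 0"
  by (auto simp: simplical_face_def simplex_vertex_def)

lemma singular_face_1_eq_const_simplex:
  "singular_face 1 0 \<sigma> = const_simplex (\<sigma> (simplex_vertex 1))"
  "singular_face 1 1 \<sigma> = const_simplex (\<sigma> (simplex_vertex 0))"
  unfolding singular_face_def const_simplex_def
  using simplical_face_simplex_vertex simplical_face_simplex_vertex[unfolded One_nat_def]
  by (auto intro!: restrict_ext simp: standard_simplex_0_eq)

lemma limitin_const_simplex:
  assumes u: "\<And>n. u n \<in> topspace X" "limitin X u l sequentially"
  shows "limitin (compact_open_simplices 0 X) (\<lambda>n. const_simplex (u n)) (const_simplex l) sequentially"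
  unfolding compact_open_simplices_def
proof (rule limitin_topology_generated_by)
  show "const_simplex l \<in> \<Union> {{\<sigma>. singular_simplex 0 X \<sigma> \<and> \<sigma> ` K \<subseteq> U} | K U.
      compactin (simplex_space 0) K \<and> openin X U}"
    using const_simplex_in_compact_open_simplices[OF limitin_topspace[OF u(2)]]
    by (simp add: compact_open_simplices_def)
  fix s assume "s \<in> {{\<sigma>. singular_simplex 0 X \<sigma> \<and> \<sigma> ` K \<subseteq> U} | K U.
      compactin (simplex_space 0) K \<and> openin X U}" and ls: "const_simplex l \<in> s"
  then obtain K V where s: "s = {\<sigma>. singular_simplex 0 X \<sigma> \<and> \<sigma> ` K \<subseteq> V}"
    and K: "compactin (simplex_space 0) K" and V: "openin X V" by blast
  have "K \<subseteq> {simplex_vertex 0}"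
    using compactin_subset_topspace[OF K] by (simp add: standard_simplex_0_eq)
  then consider "K = {}" | "K = {simplex_vertex 0}" by blast
  then show "\<forall>\<^sub>F n in sequentially. const_simplex (u n) \<in> s"
  proof cases
    case 1 then show ?thesis using u(1) by (simp add: s singular_simplex_const_simplex)
  next
    case 2
    then have "l \<in> V" using ls s by simp
    then have "\<forall>\<^sub>F n in sequentially. u n \<in> V" using u(2) V by (simp add: limitin_def)
    then show ?thesis by (rule eventually_mono) (simp add: s 2 u(1) singular_simplex_const_simplex)
  qed
qed

lemma singleton_borel_compact_open_simplices_0:
  assumes X: "t1_space X" and \<tau>: "\<tau> \<in> topspace (compact_open_simplices 0 X)"
  shows "{\<tau>} \<in> borel_sets_of (compact_open_simplices 0 X)"
proof -
  let ?T = "compact_open_simplices 0 X" and ?v = "simplex_vertex 0"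
  have vertex_in_X: "\<sigma> ?v \<in> topspace X" if "\<sigma> \<in> topspace ?T" for \<sigma>
    using that simplex_vertex_in_standard_simplex[of 0 0]
    by (auto simp: topspace_compact_open_simplices singular_simplex_def continuous_map_def)
  have "\<sigma> = \<tau> \<longleftrightarrow> \<sigma> ?v = \<tau> ?v" if "\<sigma> \<in> topspace ?T" for \<sigma>
    using compact_open_simplices_0_eq_const_simplex[OF that] compact_open_simplices_0_eq_const_simplex[OF \<tau>]
    by metis
  with vertex_in_X have eq: "topspace ?T - {\<tau>} = {\<sigma> \<in> topspace ?T. \<sigma> ?v \<in> topspace X - {\<tau> ?v}}"
    by auto
  have "openin ?T {\<sigma> \<in> topspace ?T. \<sigma> ?v \<in> topspace X - {\<tau> ?v}}"
    using closedin_t1_singleton[OF X vertex_in_X[OF \<tau>]]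
    by (intro openin_compact_open_simplices_eval simplex_vertex_in_standard_simplex) (auto simp: closedin_def)
  then have "topspace ?T - {\<tau>} \<in> borel_sets_of ?T"
    unfolding eq by (rule borel_sets_of_openin)
  from borel_sets_of_compl[OF this] show ?thesis using \<tau> by (simp add: Diff_Diff_Int)
qed

section \<open>Oscillation depth on the topologist's sine curve\<close>

definition sine_tail_width :: "nat \<Rightarrow> real" where
  "sine_tail_width k = 1 / (2 * pi * (real k + 1))"

definition sine_tail :: "nat \<Rightarrow> (real \<times> real) set" where
  "sine_tail k = {(x, sin (1 / x)) | x. 0 < x \<and> x < sine_tail_width k}"

text \<open>The tails are nested and shrink to the empty set, so \<open>u \<in> sine_tail k \<longleftrightarrow> k < sine_depth u\<close>;
  between consecutive tails the curve makes one full oscillation.\<close>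

definition sine_depth :: "real \<times> real \<Rightarrow> nat" where
  "sine_depth u = (LEAST k. u \<notin> sine_tail k)"

lemma sine_tail_width_antimono: "k \<le> m \<Longrightarrow> sine_tail_width m \<le> sine_tail_width k"
  unfolding sine_tail_width_def by (auto intro!: divide_left_mono mult_pos_pos)

lemma sine_tail_width_lt_warsaw_xmin: "sine_tail_width k < warsaw_xmin"
proof -
  have "sine_tail_width k \<le> 1 / (2 * pi)"
    using sine_tail_width_antimono[of 0 k] by (simp add: sine_tail_width_def)
  also have "1 / (2 * pi) < 2 / (3 * pi)" by (simp add: field_simps)
  finally show ?thesis by (simp add: warsaw_xmin_def)
qed

lemma sine_tail_antimono: "k \<le> m \<Longrightarrow> sine_tail m \<subseteq> sine_tail k"
  unfolding sine_tail_def using sine_tail_width_antimono by fastforce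

lemma mem_sine_tail:
  "u \<in> sine_tail k \<longleftrightarrow> 0 < fst u \<and> fst u < sine_tail_width k \<and> snd u = sin (1 / fst u)"
  unfolding sine_tail_def by (cases u) auto

lemma sine_tail_subset_warsaw_sine_part: "sine_tail k \<subseteq> warsaw_sine_part"
  unfolding sine_tail_def warsaw_sine_part_def using sine_tail_width_lt_warsaw_xmin[of k] by fastforce

lemma ex_not_mem_sine_tail: "\<exists>k. u \<notin> sine_tail k"
proof (cases "0 < fst u")
  case True
  obtain n :: nat where "1 / (2 * pi * fst u) < real n" using reals_Archimedean2 by blast
  then have "1 / (2 * pi * fst u) < real n + 1" by linarith
  then have "1 < fst u * (2 * pi * (real n + 1))"
    using True by (simp add: field_simps)
  then have "sine_tail_width n < fst u"
    unfolding sine_tail_width_def by (subst pos_divide_less_eq) auto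
  then have "u \<notin> sine_tail n" by (simp add: mem_sine_tail)
  then show ?thesis by blast
qed (auto simp: mem_sine_tail)

lemma mem_sine_tail_iff_sine_depth: "u \<in> sine_tail k \<longleftrightarrow> k < sine_depth u"
proof
  assume u: "u \<in> sine_tail k"
  have "u \<notin> sine_tail (sine_depth u)"
    unfolding sine_depth_def by (rule LeastI_ex) (rule ex_not_mem_sine_tail)
  then show "k < sine_depth u"
    using u sine_tail_antimono[of "sine_depth u" k] by (cases "k < sine_depth u") auto
next
  assume "k < sine_depth u"
  then show "u \<in> sine_tail k" unfolding sine_depth_def using not_less_Least by blast
qed

lemma sin_2pi_multiple_add: "sin (2 * pi * real m + c) = sin c"
  using sin_2npi[of m] cos_2npi[of m] by (simp add: sin_add mult.commute mult.left_commute)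

lemma closed_preimage_left_limit:
  fixes f :: "real \<Rightarrow> 'b::topological_space"
  assumes "continuous_on {a..c} f" "a < c" "closed C" "\<And>t. a \<le> t \<Longrightarrow> t < c \<Longrightarrow> f t \<in> C"
  shows "f c \<in> C"
proof -
  have "closed ({a..c} \<inter> f -` C)"
    using assms by (intro continuous_closed_preimage) auto
  moreover have "{a..<c} \<subseteq> {a..c} \<inter> f -` C" using assms(4) by auto
  ultimately have "closure {a..<c} \<subseteq> {a..c} \<inter> f -` C" by (rule closure_minimal[rotated])
  then have "{a..c} \<subseteq> f -` C" using assms(2) by simp
  moreover have "c \<in> {a..c}" using assms(2) by simp
  ultimately show ?thesis by blast
qed

lemma first_exit_time:
  fixes \<gamma> :: "real \<Rightarrow> 'a::metric_space"
  assumes cont: "continuous_on {a..b} \<gamma>" and img: "\<gamma> ` {a..b} \<subseteq> W" and "a \<le> b"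
    and S: "openin (top_of_set W) S" and "\<gamma> a \<in> S" "\<gamma> b \<notin> S"
  shows "\<exists>\<tau>. a < \<tau> \<and> \<tau> \<le> b \<and> \<gamma> \<tau> \<notin> S \<and> (\<forall>t. a \<le> t \<longrightarrow> t < \<tau> \<longrightarrow> \<gamma> t \<in> S)"
proof -
  obtain C where C: "closed C" "W - S = W \<inter> C"
    using S by (auto simp: openin_closedin_eq closedin_closed)
  define E where "E = {a..b} \<inter> \<gamma> -` C"
  have E: "t \<in> E \<longleftrightarrow> t \<in> {a..b} \<and> \<gamma> t \<notin> S" for t
  proof -
    have "\<gamma> t \<in> W" if "t \<in> {a..b}" using img that by auto
    then show ?thesis using C(2) unfolding E_def by blast
  qed
  have "closed E" unfolding E_def using cont C(1) by (intro continuous_closed_preimage) auto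
  moreover have "b \<in> E" "bdd_below E" using assms E by (auto intro: bdd_belowI[of _ a])
  ultimately have "Inf E \<in> E" using closed_contains_Inf by blast
  moreover have "\<gamma> t \<in> S" if "a \<le> t" "t < Inf E" for t
    using that cInf_lower[OF _ \<open>bdd_below E\<close>, of t] \<open>Inf E \<in> E\<close> E by fastforce
  ultimately show ?thesis
    using E assms(5) by (intro exI[of _ "Inf E"]) (auto simp: order.order_iff_strict)
qed

lemma sine_tail_left_limit:
  fixes \<gamma> :: "real \<Rightarrow> real \<times> real"
  assumes cont: "continuous_on {a..\<tau>} \<gamma>" and "a < \<tau>"
    and tail: "\<And>t. a \<le> t \<Longrightarrow> t < \<tau> \<Longrightarrow> \<gamma> t \<in> sine_tail k"
  shows "fst (\<gamma> \<tau>) = 0 \<or> fst (\<gamma> \<tau>) = sine_tail_width k \<or> \<gamma> \<tau> \<in> sine_tail k"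
proof -
  have "continuous_on {a..\<tau>} (\<lambda>t. fst (\<gamma> t))" using cont by (intro continuous_intros)
  then have "fst (\<gamma> \<tau>) \<in> {0..sine_tail_width k}"
  proof (rule closed_preimage_left_limit[OF _ \<open>a < \<tau>\<close>])
    fix t assume "a \<le> t" "t < \<tau>"
    then show "fst (\<gamma> t) \<in> {0..sine_tail_width k}" using tail[of t] by (simp add: mem_sine_tail)
  qed simp
  moreover have "\<gamma> \<tau> \<in> sine_tail k" if "0 < fst (\<gamma> \<tau>)" "fst (\<gamma> \<tau>) < sine_tail_width k"
  proof -
    have "fst (\<gamma> t) \<noteq> 0" if "t \<in> {a..\<tau>}" for t
      using that tail[of t] \<open>0 < fst (\<gamma> \<tau>)\<close> by (cases "t = \<tau>") (auto simp: mem_sine_tail)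
    then have "continuous_on {a..\<tau>} (\<lambda>t. snd (\<gamma> t) - sin (1 / fst (\<gamma> t)))"
      using cont by (intro continuous_intros) auto
    then have "snd (\<gamma> \<tau>) - sin (1 / fst (\<gamma> \<tau>)) \<in> {0}"
    proof (rule closed_preimage_left_limit[OF _ \<open>a < \<tau>\<close>])
      fix t assume "a \<le> t" "t < \<tau>"
      then show "snd (\<gamma> t) - sin (1 / fst (\<gamma> t)) \<in> {0}" using tail[of t] by (simp add: mem_sine_tail)
    qed simp
    then show ?thesis using that by (simp add: mem_sine_tail)
  qed
  ultimately show ?thesis by (auto simp: less_le)
qed

lemma sine_tail_exit_sweeps:
  fixes \<gamma> :: "real \<Rightarrow> real \<times> real"
  assumes cont: "continuous_on {a..b} \<gamma>" and img: "\<gamma> ` {a..b} \<subseteq> W" and "a \<le> b"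
    and open_tail: "openin (top_of_set W) (sine_tail k)"
    and start: "\<gamma> a \<in> sine_tail k" and "\<gamma> b \<notin> sine_tail k"
  shows "(\<forall>s. 0 < s \<and> s < fst (\<gamma> a) \<longrightarrow> (\<exists>t\<in>{a..b}. snd (\<gamma> t) = sin (1 / s)))
       \<or> (\<forall>s. fst (\<gamma> a) \<le> s \<and> s < sine_tail_width k \<longrightarrow> (\<exists>t\<in>{a..b}. snd (\<gamma> t) = sin (1 / s)))"
proof -
  obtain \<tau> where \<tau>: "a < \<tau>" "\<tau> \<le> b" "\<gamma> \<tau> \<notin> sine_tail k"
    and before: "\<And>t. a \<le> t \<Longrightarrow> t < \<tau> \<Longrightarrow> \<gamma> t \<in> sine_tail k"
    using first_exit_time[OF assms] by blast
  define h where "h = (\<lambda>t. fst (\<gamma> t))"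
  have cont_\<tau>: "continuous_on {a..\<tau>} \<gamma>" using cont \<tau> by (auto intro: continuous_on_subset)
  then have "continuous_on {a..\<tau>} h" unfolding h_def by (intro continuous_intros)
  have hit: "\<exists>t\<in>{a..b}. snd (\<gamma> t) = sin (1 / s)"
    if s: "s \<noteq> h \<tau>" "(h \<tau> \<le> s \<and> s \<le> h a) \<or> (h a \<le> s \<and> s \<le> h \<tau>)" for s
  proof -
    obtain t where t: "t \<in> {a..\<tau>}" "h t = s"
      using s(2) IVT'[of h a s \<tau>] IVT2'[of h \<tau> s a] \<open>continuous_on {a..\<tau>} h\<close> \<tau>(1) by auto
    then have "t < \<tau>" using s(1) by (cases "t = \<tau>") auto
    then show ?thesis using before[of t] t \<tau> by (auto simp: mem_sine_tail h_def)
  qed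
  have "h \<tau> = 0 \<or> h \<tau> = sine_tail_width k"
    using sine_tail_left_limit[OF cont_\<tau> \<tau>(1) before] \<tau>(3) by (simp add: h_def)
  then show ?thesis using hit by (auto simp: h_def)
qed

text \<open>A path from the tail \<open>k + 1\<close> to a point outside the tail \<open>k\<close> sweeps a full period of
  \<open>sin (1 / x)\<close>, so it attains every value \<open>sin c\<close>.\<close>

lemma sine_tail_crossing_attains:
  fixes \<gamma> :: "real \<Rightarrow> real \<times> real"
  assumes cont: "continuous_on {a..b} \<gamma>" and img: "\<gamma> ` {a..b} \<subseteq> W" and ab: "a \<le> b"
    and open_tail: "openin (top_of_set W) (sine_tail k)"
    and start: "\<gamma> a \<in> sine_tail (Suc k)" and stop: "\<gamma> b \<notin> sine_tail k"
    and c: "0 < c" "c < 2 * pi"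
  shows "\<exists>t\<in>{a..b}. snd (\<gamma> t) = sin c"
proof -
  define x where "x = fst (\<gamma> a)"
  have x: "0 < x" "x < sine_tail_width (Suc k)" using start unfolding mem_sine_tail x_def by auto
  have "\<gamma> a \<in> sine_tail k" using start sine_tail_antimono[of k "Suc k"] by auto
  from sine_tail_exit_sweeps[OF cont img ab open_tail this stop]
  show ?thesis
  proof
    assume sweep: "\<forall>s. 0 < s \<and> s < fst (\<gamma> a) \<longrightarrow> (\<exists>t\<in>{a..b}. snd (\<gamma> t) = sin (1 / s))"
    obtain m :: nat where m: "1 / x < real m" using reals_Archimedean2 by blast
    have "real m \<le> 2 * pi * real m" using pi_gt3 mult_right_mono[of 1 "2 * pi" "real m"] by simp
    then have "1 / x < 2 * pi * real m + c" using m c by linarith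
    moreover have pos: "0 < 2 * pi * real m + c" using c by (simp add: add_nonneg_pos)
    ultimately have "1 / (2 * pi * real m + c) < 1 / (1 / x)"
      using x(1) by (intro divide_strict_left_mono) auto
    then have "1 / (2 * pi * real m + c) < x" by simp
    moreover have "0 < 1 / (2 * pi * real m + c)" using pos by simp
    ultimately obtain t where "t \<in> {a..b}" "snd (\<gamma> t) = sin (1 / (1 / (2 * pi * real m + c)))"
      using sweep unfolding x_def by blast
    then show ?thesis using sin_2pi_multiple_add[of m c] by auto
  next
    assume sweep: "\<forall>s. fst (\<gamma> a) \<le> s \<and> s < sine_tail_width k \<longrightarrow> (\<exists>t\<in>{a..b}. snd (\<gamma> t) = sin (1 / s))"
    define A where "A = 2 * pi * real (Suc k)"
    have A: "0 < A" "sine_tail_width k = 1 / A" "sine_tail_width (Suc k) = 1 / (A + 2 * pi)"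
      by (simp add: A_def) (simp_all add: A_def sine_tail_width_def algebra_simps)
    have "1 / (A + c) < 1 / A" "1 / (A + 2 * pi) < 1 / (A + c)"
      using A(1) c by (auto intro!: divide_strict_left_mono mult_pos_pos)
    then have "fst (\<gamma> a) \<le> 1 / (A + c) \<and> 1 / (A + c) < sine_tail_width k"
      using x A unfolding x_def by linarith
    then obtain t where "t \<in> {a..b}" "snd (\<gamma> t) = sin (1 / (1 / (A + c)))"
      using sweep by blast
    then show ?thesis using sin_2pi_multiple_add[of "Suc k" c] by (auto simp: A_def)
  qed
qed

lemma sine_depth_step_le:
  fixes \<gamma> :: "real \<Rightarrow> real \<times> real"
  assumes cont: "continuous_on {a..b} \<gamma>" and img: "\<gamma> ` {a..b} \<subseteq> W" and ab: "a \<le> b"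
    and open_tails: "\<And>k. openin (top_of_set W) (sine_tail k)"
    and avoids: "(\<forall>t\<in>{a..b}. snd (\<gamma> t) \<noteq> 1) \<or> (\<forall>t\<in>{a..b}. snd (\<gamma> t) \<noteq> -1)"
  shows "sine_depth (\<gamma> a) \<le> Suc (sine_depth (\<gamma> b))"
proof (rule ccontr)
  assume "\<not> sine_depth (\<gamma> a) \<le> Suc (sine_depth (\<gamma> b))"
  then have "\<gamma> a \<in> sine_tail (Suc (sine_depth (\<gamma> b)))" "\<gamma> b \<notin> sine_tail (sine_depth (\<gamma> b))"
    by (auto simp: mem_sine_tail_iff_sine_depth)
  note crossing = sine_tail_crossing_attains[OF cont img ab open_tails this]
  have "sin (pi / 2) = 1" "sin (3 * pi / 2) = -1"
    using sin_3over2_pi by (simp_all add: field_simps)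
  moreover have "\<exists>t\<in>{a..b}. snd (\<gamma> t) = sin (pi / 2)" "\<exists>t\<in>{a..b}. snd (\<gamma> t) = sin (3 * pi / 2)"
    by (rule crossing; simp)+
  ultimately show False using avoids by auto
qed

lemma sine_depth_step:
  fixes \<gamma> :: "real \<Rightarrow> real \<times> real"
  assumes cont: "continuous_on {a..b} \<gamma>" and img: "\<gamma> ` {a..b} \<subseteq> W" and ab: "a \<le> b"
    and open_tails: "\<And>k. openin (top_of_set W) (sine_tail k)"
    and avoids: "(\<forall>t\<in>{a..b}. snd (\<gamma> t) \<noteq> 1) \<or> (\<forall>t\<in>{a..b}. snd (\<gamma> t) \<noteq> -1)"
  shows "sine_depth (\<gamma> a) \<le> Suc (sine_depth (\<gamma> b)) \<and> sine_depth (\<gamma> b) \<le> Suc (sine_depth (\<gamma> a))"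
proof
  show "sine_depth (\<gamma> a) \<le> Suc (sine_depth (\<gamma> b))" by (rule sine_depth_step_le[OF assms])
  define \<delta> where "\<delta> = (\<lambda>t. \<gamma> (a + b - t))"
  have flip: "(\<lambda>t. a + b - t) ` {a..b} = {a..b}"
    by (auto intro!: image_eqI[where x="a + b - t" for t])
  have "continuous_on {a..b} \<delta>"
    unfolding \<delta>_def by (rule continuous_on_compose2[OF cont]) (auto intro!: continuous_intros)
  moreover have "\<delta> ` {a..b} \<subseteq> W" using img flip by (auto simp: \<delta>_def image_subset_iff)
  moreover have "(\<forall>t\<in>{a..b}. snd (\<delta> t) \<noteq> 1) \<or> (\<forall>t\<in>{a..b}. snd (\<delta> t) \<noteq> -1)"
    using avoids by (auto simp: \<delta>_def)
  ultimately have "sine_depth (\<delta> a) \<le> Suc (sine_depth (\<delta> b))"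
    using sine_depth_step_le[OF _ _ ab open_tails] by blast
  then show "sine_depth (\<gamma> b) \<le> Suc (sine_depth (\<gamma> a))" by (simp add: \<delta>_def)
qed

lemma sine_depth_path_bound:
  fixes \<gamma> :: "real \<Rightarrow> real \<times> real"
  assumes cont: "continuous_on {0..1} \<gamma>" and img: "\<gamma> ` {0..1} \<subseteq> W" and "0 < n"
    and open_tails: "\<And>k. openin (top_of_set W) (sine_tail k)"
    and avoids: "\<And>i. i < n \<Longrightarrow> (\<forall>t\<in>{real i / n..real (Suc i) / n}. snd (\<gamma> t) \<noteq> 1)
                                \<or> (\<forall>t\<in>{real i / n..real (Suc i) / n}. snd (\<gamma> t) \<noteq> -1)"
  shows "sine_depth (\<gamma> 0) \<le> sine_depth (\<gamma> 1) + n \<and> sine_depth (\<gamma> 1) \<le> sine_depth (\<gamma> 0) + n"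
proof -
  have "sine_depth (\<gamma> 0) \<le> sine_depth (\<gamma> (i / n)) + i \<and> sine_depth (\<gamma> (i / n)) \<le> sine_depth (\<gamma> 0) + i"
    if "i \<le> n" for i
    using that
  proof (induction i)
    case (Suc i)
    have sub: "{real i / n..real (Suc i) / n} \<subseteq> {0..1}"
      using Suc.prems \<open>0 < n\<close> by (auto simp: field_simps)
    have "sine_depth (\<gamma> (i / n)) \<le> Suc (sine_depth (\<gamma> (Suc i / n))) \<and>
          sine_depth (\<gamma> (Suc i / n)) \<le> Suc (sine_depth (\<gamma> (i / n)))"
      using image_mono[OF sub, of \<gamma>] img Suc.prems
      by (intro sine_depth_step[OF continuous_on_subset[OF cont sub] _ _ open_tails avoids])
        (auto simp: divide_right_mono)
    then show ?case using Suc by auto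
  qed simp
  from this[of n] show ?thesis using \<open>0 < n\<close> by simp
qed

definition simplex_edge :: "real \<Rightarrow> nat \<Rightarrow> real" where
  "simplex_edge t = (\<lambda>i. if i = 0 then 1 - t else if i = 1 then t else 0)"

lemma simplex_edge_0: "simplex_edge 0 = simplex_vertex 0"
  and simplex_edge_1: "simplex_edge 1 = simplex_vertex 1"
  by (auto simp: simplex_edge_def simplex_vertex_def)

lemma simplex_edge_in_standard_simplex: "t \<in> {0..1} \<Longrightarrow> simplex_edge t \<in> standard_simplex 1"
  unfolding standard_simplex_def simplex_edge_def by auto

lemma continuous_map_simplex_edge:
  "continuous_map (top_of_set {0..1}) (simplex_space 1) simplex_edge"
proof -
  have "continuous_map euclideanreal euclideanreal (\<lambda>t. simplex_edge t i)" for i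
    by (cases "i = 0 \<or> i = 1") (auto simp: simplex_edge_def intro: continuous_intros)
  then have "continuous_map euclideanreal (powertop_real UNIV) simplex_edge"
    by (simp add: continuous_map_componentwise_UNIV)
  then show ?thesis
    using simplex_edge_in_standard_simplex
    by (auto simp: continuous_map_in_subtopology intro: continuous_map_from_subtopology)
qed

lemma compactin_simplex_edge_image:
  assumes "{a..b} \<subseteq> {0..1}"
  shows "compactin (simplex_space 1) (simplex_edge ` {a..b})"
  using image_compactin[OF _ continuous_map_simplex_edge] assms
  by (metis compact_Icc compactin_euclidean_iff compactin_subtopology
      subtopology_subtopology topspace_euclidean_subtopology)

lemma singular_simplex_edge_path:
  assumes "singular_simplex 1 (top_of_set W) \<sigma>"
  shows "continuous_on {0..1} (\<lambda>t. \<sigma> (simplex_edge t))" "(\<lambda>t. \<sigma> (simplex_edge t)) ` {0..1} \<subseteq> W"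
proof -
  have "continuous_map (top_of_set {0..1}) (top_of_set W) (\<sigma> \<circ> simplex_edge)"
    using assms continuous_map_simplex_edge unfolding singular_simplex_def
    by (blast intro: continuous_map_compose)
  then show "continuous_on {0..1} (\<lambda>t. \<sigma> (simplex_edge t))" "(\<lambda>t. \<sigma> (simplex_edge t)) ` {0..1} \<subseteq> W"
    by (auto simp: o_def)
qed

lemma uniform_partition_oscillation:
  fixes y :: "real \<Rightarrow> real"
  assumes "continuous_on {0..1} y"
  shows "\<exists>n>0. \<forall>i<n. \<forall>t\<in>{real i / n..real (Suc i) / n}. \<bar>y t - y (real i / n)\<bar> < 1"
proof -
  obtain d where d: "d > 0" "\<And>x x'. x \<in> {0..1} \<Longrightarrow> x' \<in> {0..1} \<Longrightarrow> dist x' x < d \<Longrightarrow> dist (y x') (y x) < 1"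
    using compact_uniformly_continuous[OF assms compact_Icc]
    unfolding uniformly_continuous_on_def by (metis zero_less_one)
  obtain n :: nat where n: "1 / d < real n" using reals_Archimedean2 by blast
  then have "0 < n" using d by (cases n) (auto simp: field_simps)
  have "1 / real n < d" using n d \<open>0 < n\<close> by (simp add: field_simps)
  have "\<bar>y t - y (real i / n)\<bar> < 1" if "i < n" "t \<in> {real i / n..real (Suc i) / n}" for i t
  proof -
    have "real (Suc i) / n - real i / n = 1 / n" by (simp add: diff_divide_distrib[symmetric])
    then have "dist t (real i / n) < d" using that(2) \<open>1 / real n < d\<close> by (auto simp: dist_real_def)
    moreover have "0 \<le> real i / n" "real (Suc i) / n \<le> 1" using that(1) by auto
    then have "t \<in> {0..1}" "real i / n \<in> {0..1}"
      using that(2) unfolding atLeastAtMost_iff by (intro conjI; linarith)+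
    ultimately show ?thesis using d(2) by (auto simp: dist_real_def)
  qed
  then show ?thesis using \<open>0 < n\<close> by blast
qed

lemma topspace_berlanga_chains: "topspace (berlanga_chains k X) = mt_chains k X"
proof -
  have "mt_chains k X \<in> {{\<mu> \<in> mt_chains k X. signed_integral (compact_open_simplices k X) \<mu> f \<in> U} | f U.
        continuous_map (compact_open_simplices k X) euclideanreal f \<and> open U}"
    by (intro CollectI exI[of _ "\<lambda>_. 0"] exI[of _ UNIV]) auto
  then show ?thesis unfolding berlanga_chains_def by auto
qed

lemma limitin_berlanga_chains:
  assumes "\<mu> \<in> mt_chains k X"
    and "\<And>f. continuous_map (compact_open_simplices k X) euclideanreal f \<Longrightarrow>
           ((\<lambda>n. signed_integral (compact_open_simplices k X) (\<mu>s n) f)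
              \<longlongrightarrow> signed_integral (compact_open_simplices k X) \<mu> f) sequentially"
    and "\<And>n. \<mu>s n \<in> mt_chains k X"
  shows "limitin (berlanga_chains k X) \<mu>s \<mu> sequentially"
  unfolding berlanga_chains_def
proof (rule limitin_topology_generated_by)
  show "\<mu> \<in> \<Union> {{\<mu> \<in> mt_chains k X. signed_integral (compact_open_simplices k X) \<mu> f \<in> U} | f U.
        continuous_map (compact_open_simplices k X) euclideanreal f \<and> open U}"
    using assms(1) topspace_berlanga_chains[of k X] by (simp add: berlanga_chains_def)
  fix s assume "s \<in> {{\<mu> \<in> mt_chains k X. signed_integral (compact_open_simplices k X) \<mu> f \<in> U} | f U.
        continuous_map (compact_open_simplices k X) euclideanreal f \<and> open U}" "\<mu> \<in> s"
  then obtain f U where s: "s = {\<mu> \<in> mt_chains k X. signed_integral (compact_open_simplices k X) \<mu> f \<in> U}"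
    and f: "continuous_map (compact_open_simplices k X) euclideanreal f" and "open U" "\<mu> \<in> s"
    by blast
  then have "\<forall>\<^sub>F n in sequentially. signed_integral (compact_open_simplices k X) (\<mu>s n) f \<in> U"
    using topological_tendstoD[OF assms(2)[OF f]] by auto
  then show "\<forall>\<^sub>F n in sequentially. \<mu>s n \<in> s"
    by (rule eventually_mono) (simp add: s assms(3))
qed

definition sine_point :: "real \<Rightarrow> real \<times> real" where
  "sine_point \<theta> = (1 / \<theta>, sin \<theta>)"

definition peak_angle :: "nat \<Rightarrow> real" where
  "peak_angle j = 2 * pi * (real j + 1) + pi / 2"

lemma sine_point_mem_warsaw_sine_part:
  assumes "3 * pi / 2 \<le> \<theta>"
  shows "sine_point \<theta> \<in> warsaw_sine_part"
proof -
  have "0 < \<theta>" using assms pi_gt_zero by linarith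
  moreover from this have "1 / \<theta> \<le> 2 / (3 * pi)" using assms by (simp add: field_simps)
  ultimately show ?thesis
    unfolding sine_point_def warsaw_sine_part_def warsaw_xmin_def by (intro CollectI exI[of _ "1 / \<theta>"]) auto
qed

lemma sine_point_3pi_half: "sine_point (3 * pi / 2) = (warsaw_xmin, -1)"
  using sin_3over2_pi by (simp add: sine_point_def warsaw_xmin_def field_simps)

lemma peak_angle_ge: "3 * pi / 2 \<le> peak_angle j"
  unfolding peak_angle_def using pi_gt_zero by (simp add: field_simps)

lemma peak_angle_pos: "0 < peak_angle j"
  using peak_angle_ge[of j] pi_gt_zero by linarith

lemma sin_peak_angle: "sin (peak_angle j) = 1"
  using sin_2pi_multiple_add[of "Suc j" "pi / 2"] by (simp add: peak_angle_def add.commute)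

lemma sine_point_peak_angle_limit: "(\<lambda>j. sine_point (peak_angle j)) \<longlonglongrightarrow> (0, 1)"
proof -
  have "1 / peak_angle j \<le> inverse (real (Suc j))" for j
  proof -
    have "real j + 1 \<le> 2 * pi * (real j + 1)" using pi_gt3 by simp
    then have "real (Suc j) \<le> peak_angle j" unfolding peak_angle_def of_nat_Suc using pi_gt_zero by linarith
    then show ?thesis by (simp add: inverse_eq_divide frac_le)
  qed
  moreover have "0 \<le> 1 / peak_angle j" for j using peak_angle_pos[of j] by simp
  ultimately have "(\<lambda>j. 1 / peak_angle j) \<longlonglongrightarrow> 0"
    by (intro tendsto_sandwich[OF _ _ tendsto_const LIMSEQ_inverse_real_of_nat] always_eventually allI)
  then show ?thesis unfolding sine_point_def sin_peak_angle by (intro tendsto_Pair tendsto_const)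
qed

lemma sine_point_peak_angle_mem_sine_tail:
  "sine_point (peak_angle j) \<in> sine_tail k \<longleftrightarrow> k \<le> j"
proof -
  have pos: "0 < peak_angle j" "0 < 2 * pi * (real k + 1)" using peak_angle_pos[of j] by simp_all
  have "sine_point (peak_angle j) \<in> sine_tail k \<longleftrightarrow> 1 / peak_angle j < 1 / (2 * pi * (real k + 1))"
    using pos by (simp add: mem_sine_tail sine_point_def sine_tail_width_def sin_peak_angle)
  also have "\<dots> \<longleftrightarrow> 2 * pi * (real k + 1) < peak_angle j"
    using inverse_less_iff_less[OF pos] by (simp only: inverse_eq_divide)
  also have "\<dots> \<longleftrightarrow> k \<le> j"
  proof
    assume less: "2 * pi * (real k + 1) < peak_angle j"
    show "k \<le> j"
    proof (rule ccontr)
      assume "\<not> k \<le> j"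
      then have "2 * pi * (real j + 2) \<le> 2 * pi * (real k + 1)" by simp
      then show False using less pi_gt_zero by (simp add: peak_angle_def algebra_simps)
    qed
  next
    assume "k \<le> j"
    then have "2 * pi * (real k + 1) \<le> 2 * pi * (real j + 1)" by simp
    then show "2 * pi * (real k + 1) < peak_angle j"
      unfolding peak_angle_def using pi_gt_zero by linarith
  qed
  finally show ?thesis .
qed

text \<open>Weights \<open>1/(j+1) - 1/(j+2)\<close>: they sum to \<open>1\<close>, and the tail from \<open>k\<close> on sums to \<open>1/(k+1)\<close>,
  which is not summable in \<open>k\<close>.\<close>

definition telescoping_weight :: "nat \<Rightarrow> real" where
  "telescoping_weight j = 1 / (real j + 1) - 1 / (real j + 2)"

lemma telescoping_weight_nonneg: "0 \<le> telescoping_weight j"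
  by (simp add: telescoping_weight_def frac_le)

lemma telescoping_weight_tail_sums:
  "(\<lambda>j. if k \<le> j then telescoping_weight j else 0) sums (1 / (real k + 1))"
proof -
  define f where "f j = 1 / (real (max j k) + 1)" for j
  have "(\<lambda>j. 1 / (real j + 1)) \<longlonglongrightarrow> 0"
    using LIMSEQ_inverse_real_of_nat by (simp add: inverse_eq_divide add.commute)
  moreover have "\<forall>\<^sub>F j in sequentially. 1 / (real j + 1) = f j"
    by (rule eventually_sequentiallyI[of k]) (simp add: f_def max_def)
  ultimately have "f \<longlonglongrightarrow> 0" by (rule Lim_transform_eventually)
  then have "(\<lambda>j. f j - f (Suc j)) sums (f 0 - 0)" by (rule telescope_sums')
  moreover have "f j - f (Suc j) = (if k \<le> j then telescoping_weight j else 0)" for j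
    by (auto simp: f_def telescoping_weight_def max_def add.commute)
  ultimately show ?thesis by (simp add: f_def)
qed

lemma telescoping_weight_sums: "telescoping_weight sums 1"
  using telescoping_weight_tail_sums[of 0] by simp

lemma not_summable_inverse_Suc: "\<not> summable (\<lambda>k. 1 / (real k + 1))"
proof
  assume "summable (\<lambda>k. 1 / (real k + 1))"
  then have "summable (\<lambda>n. inverse (real (Suc n)))" by (simp add: inverse_eq_divide add.commute)
  then have "summable (\<lambda>n. inverse (real n))"
    by (subst (asm) summable_Suc_iff[of "\<lambda>n. inverse (real n)"])
  then show False using not_summable_harmonic[where 'a=real] by simp
qed

text \<open>Only two properties of the closing arc matter: it is closed and it avoids the sine curve
  except at its rightmost minimum.\<close>

locale warsaw_circle =
  fixes C :: "(real \<times> real) set"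
  assumes closed_arc: "closed C"
    and arc_meets_sine_part: "C \<inter> warsaw_sine_part \<subseteq> {(warsaw_xmin, -1)}"
begin

abbreviation warsaw :: "(real \<times> real) set" where
  "warsaw \<equiv> warsaw_sine_part \<union> warsaw_segment \<union> C"

abbreviation simplices :: "nat \<Rightarrow> ((nat \<Rightarrow> real) \<Rightarrow> real \<times> real) topology" where
  "simplices k \<equiv> compact_open_simplices k (top_of_set warsaw)"

lemma openin_sine_tail: "openin (top_of_set warsaw) (sine_tail k)"
proof -
  let ?strip = "{p :: real \<times> real. 0 < fst p \<and> fst p < sine_tail_width k}"
  have "open (?strip - C)"
    using closed_arc by (intro open_Diff open_Collect_conj open_Collect_less continuous_intros)
  moreover have "sine_tail k = warsaw \<inter> (?strip - C)"
  proof
    show "sine_tail k \<subseteq> warsaw \<inter> (?strip - C)"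
      using sine_tail_subset_warsaw_sine_part[of k] arc_meets_sine_part
        sine_tail_width_lt_warsaw_xmin[of k]
      by (fastforce simp: mem_sine_tail)
    show "warsaw \<inter> (?strip - C) \<subseteq> sine_tail k"
      by (auto simp: warsaw_segment_def warsaw_sine_part_def mem_sine_tail)
  qed
  ultimately show ?thesis by (auto simp: openin_open)
qed

lemma sine_depth_bounded_by_height_bands:
  assumes \<sigma>: "singular_simplex 1 (top_of_set warsaw) \<sigma>" and "0 < n"
    and bands: "\<And>i t. i < n \<Longrightarrow> t \<in> {real i / n..real (Suc i) / n} \<Longrightarrow>
                  \<bar>snd (\<sigma> (simplex_edge t)) - c i\<bar> < 1"
  shows "sine_depth (\<sigma> (simplex_vertex 0)) \<le> sine_depth (\<sigma> (simplex_vertex 1)) + n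
       \<and> sine_depth (\<sigma> (simplex_vertex 1)) \<le> sine_depth (\<sigma> (simplex_vertex 0)) + n"
proof -
  have "(\<forall>t\<in>{real i / n..real (Suc i) / n}. snd (\<sigma> (simplex_edge t)) \<noteq> 1)
      \<or> (\<forall>t\<in>{real i / n..real (Suc i) / n}. snd (\<sigma> (simplex_edge t)) \<noteq> -1)" if "i < n" for i
    using bands[OF that] by (cases "0 \<le> c i") fastforce+
  then show ?thesis
    using sine_depth_path_bound[OF singular_simplex_edge_path[OF \<sigma>] \<open>0 < n\<close> openin_sine_tail]
    by (simp add: simplex_edge_0 simplex_edge_1)
qed

lemma sine_depth_bounded_near:
  assumes "\<sigma> \<in> topspace (simplices 1)"
  shows "\<exists>N n. openin (simplices 1) N \<and> \<sigma> \<in> N \<and>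
     (\<forall>\<sigma>'\<in>N. sine_depth (\<sigma>' (simplex_vertex 0)) \<le> sine_depth (\<sigma>' (simplex_vertex 1)) + n
             \<and> sine_depth (\<sigma>' (simplex_vertex 1)) \<le> sine_depth (\<sigma>' (simplex_vertex 0)) + n)"
proof -
  have \<sigma>: "singular_simplex 1 (top_of_set warsaw) \<sigma>"
    using assms by (simp add: topspace_compact_open_simplices)
  define y where "y t = snd (\<sigma> (simplex_edge t))" for t
  have "continuous_on {0..1} y"
    unfolding y_def by (rule continuous_on_snd[OF singular_simplex_edge_path(1)[OF \<sigma>]])
  then obtain n :: nat where "0 < n"
    and osc: "\<And>i t. i < n \<Longrightarrow> t \<in> {real i / n..real (Suc i) / n} \<Longrightarrow> \<bar>y t - y (real i / n)\<bar> < 1"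
    using uniform_partition_oscillation[of y] by auto
  define I where "I i = {real i / n..real (Suc i) / n}" for i
  define U where "U i = warsaw \<inter> {u. \<bar>snd u - y (real i / n)\<bar> < 1}" for i
  define N where "N = (\<Inter>i<n. {\<sigma>'. singular_simplex 1 (top_of_set warsaw) \<sigma>' \<and>
                                   \<sigma>' ` (simplex_edge ` I i) \<subseteq> U i})"
  have I: "I i \<subseteq> {0..1}" if "i < n" for i
    using that by (auto simp: I_def field_simps)
  have "open {u :: real \<times> real. \<bar>snd u - y (real i / n)\<bar> < 1}" for i
    by (intro open_Collect_less continuous_intros)
  then have "openin (top_of_set warsaw) (U i)" for i
    unfolding U_def by (rule openin_open_Int)
  moreover have "compactin (simplex_space 1) (simplex_edge ` I i)" if "i < n" for i
    using compactin_simplex_edge_image[of "real i / n" "real (Suc i) / n"] I[OF that] by (simp add: I_def)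
  ultimately have "openin (simplices 1) {\<sigma>'. singular_simplex 1 (top_of_set warsaw) \<sigma>' \<and>
                                           \<sigma>' ` (simplex_edge ` I i) \<subseteq> U i}" if "i < n" for i
    using that by (intro openin_compact_open_simplices)
  then have "openin (simplices 1) N"
    unfolding N_def using \<open>0 < n\<close> by (intro openin_Inter) auto
  moreover have "\<sigma> \<in> N"
  proof -
    have "\<sigma> (simplex_edge t) \<in> U i" if "i < n" "t \<in> I i" for i t
      using osc[OF that[unfolded I_def]] singular_simplex_edge_path(2)[OF \<sigma>] I[OF that(1)] that(2)
      by (auto simp: U_def y_def)
    then show ?thesis using \<sigma> by (auto simp: N_def)
  qed
  moreover have "sine_depth (\<sigma>' (simplex_vertex 0)) \<le> sine_depth (\<sigma>' (simplex_vertex 1)) + n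
               \<and> sine_depth (\<sigma>' (simplex_vertex 1)) \<le> sine_depth (\<sigma>' (simplex_vertex 0)) + n"
    if "\<sigma>' \<in> N" for \<sigma>'
  proof (rule sine_depth_bounded_by_height_bands[OF _ \<open>0 < n\<close>])
    show "singular_simplex 1 (top_of_set warsaw) \<sigma>'" using that \<open>0 < n\<close> by (auto simp: N_def)
    fix i t assume "i < n" "t \<in> {real i / n..real (Suc i) / n}"
    moreover have "\<sigma>' ` (simplex_edge ` I i) \<subseteq> U i" using that \<open>i < n\<close> by (simp add: N_def)
    ultimately have "\<sigma>' (simplex_edge t) \<in> U i" by (auto simp: I_def)
    then show "\<bar>snd (\<sigma>' (simplex_edge t)) - y (real i / n)\<bar> < 1" by (simp add: U_def)
  qed
  ultimately show ?thesis by blast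
qed

lemma sine_depth_bounded_on_compactin:
  assumes "compactin (simplices 1) K"
  shows "\<exists>M. \<forall>\<sigma>\<in>K. sine_depth (\<sigma> (simplex_vertex 0)) \<le> sine_depth (\<sigma> (simplex_vertex 1)) + M
                 \<and> sine_depth (\<sigma> (simplex_vertex 1)) \<le> sine_depth (\<sigma> (simplex_vertex 0)) + M"
proof -
  obtain N n where N: "\<And>\<sigma>. \<sigma> \<in> topspace (simplices 1) \<Longrightarrow> openin (simplices 1) (N \<sigma>) \<and> \<sigma> \<in> N \<sigma> \<and>
     (\<forall>\<sigma>'\<in>N \<sigma>. sine_depth (\<sigma>' (simplex_vertex 0)) \<le> sine_depth (\<sigma>' (simplex_vertex 1)) + n \<sigma>
              \<and> sine_depth (\<sigma>' (simplex_vertex 1)) \<le> sine_depth (\<sigma>' (simplex_vertex 0)) + n \<sigma>)"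
    using sine_depth_bounded_near by metis
  have K: "K \<subseteq> topspace (simplices 1)" using assms by (simp add: compactin_subset_topspace)
  then have "\<exists>G. finite G \<and> G \<subseteq> N ` K \<and> K \<subseteq> \<Union>G"
    using assms N unfolding compactin_def by (elim conjE allE[of _ "N ` K"] impE) auto
  then obtain G where G: "finite G" "G \<subseteq> N ` K" "K \<subseteq> \<Union>G" by blast
  then obtain F where "F \<subseteq> K" "finite F" "G = N ` F" by (meson finite_subset_image)
  with G have F: "finite F" "F \<subseteq> K" "K \<subseteq> (\<Union>\<tau>\<in>F. N \<tau>)" by auto
  show ?thesis
  proof (intro exI ballI)
    fix \<sigma> assume "\<sigma> \<in> K"
    then obtain \<tau> where \<tau>: "\<tau> \<in> F" "\<sigma> \<in> N \<tau>" using F by auto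
    then have "n \<tau> \<le> (\<Sum>\<tau>\<in>F. n \<tau>)" using F(1) by (intro member_le_sum) auto
    moreover have "\<tau> \<in> topspace (simplices 1)" using \<tau>(1) F(2) K by auto
    ultimately show "sine_depth (\<sigma> (simplex_vertex 0)) \<le> sine_depth (\<sigma> (simplex_vertex 1)) + (\<Sum>\<tau>\<in>F. n \<tau>)
        \<and> sine_depth (\<sigma> (simplex_vertex 1)) \<le> sine_depth (\<sigma> (simplex_vertex 0)) + (\<Sum>\<tau>\<in>F. n \<tau>)"
      using N \<tau>(2) by fastforce
  qed
qed

definition deep_points :: "nat \<Rightarrow> ((nat \<Rightarrow> real) \<Rightarrow> real \<times> real) set" where
  "deep_points k = {\<tau> \<in> topspace (simplices 0). \<tau> (simplex_vertex 0) \<in> sine_tail k}"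

lemma deep_points_borel: "deep_points k \<in> borel_sets_of (simplices 0)"
  unfolding deep_points_def
  by (intro borel_sets_of_openin openin_compact_open_simplices_eval openin_sine_tail
      simplex_vertex_in_standard_simplex) simp

lemma sine_depth_vertex_borel:
  assumes "j \<le> 1"
  shows "{\<sigma> \<in> topspace (simplices 1). sine_depth (\<sigma> (simplex_vertex j)) = i} \<in> borel_sets_of (simplices 1)"
proof -
  have tail: "{\<sigma> \<in> topspace (simplices 1). \<sigma> (simplex_vertex j) \<in> sine_tail k} \<in> borel_sets_of (simplices 1)"
    for k
    using assms
    by (intro borel_sets_of_openin openin_compact_open_simplices_eval openin_sine_tail
        simplex_vertex_in_standard_simplex)
  have "{\<sigma> \<in> topspace (simplices 1). sine_depth (\<sigma> (simplex_vertex j)) = i}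
      = (if i = 0 then topspace (simplices 1)
         else {\<sigma> \<in> topspace (simplices 1). \<sigma> (simplex_vertex j) \<in> sine_tail (i - 1)})
        - {\<sigma> \<in> topspace (simplices 1). \<sigma> (simplex_vertex j) \<in> sine_tail i}"
    by (auto simp: mem_sine_tail_iff_sine_depth)
  then show ?thesis
    using tail by (simp add: borel_sets_of_Diff borel_sets_of_topspace)
qed

lemma sine_depth_vertices_borel:
  "{\<sigma> \<in> topspace (simplices 1). P (sine_depth (\<sigma> (simplex_vertex 0))) (sine_depth (\<sigma> (simplex_vertex 1)))}
     \<in> borel_sets_of (simplices 1)"
proof -
  define B where "B i j = (if P i j
      then {\<sigma> \<in> topspace (simplices 1). sine_depth (\<sigma> (simplex_vertex 0)) = i}
         \<inter> {\<sigma> \<in> topspace (simplices 1). sine_depth (\<sigma> (simplex_vertex 1)) = j}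
      else {})" for i j
  have "B i j \<in> borel_sets_of (simplices 1)" for i j
    using sine_depth_vertex_borel[of 0 i] sine_depth_vertex_borel[of 1 j]
    by (simp add: B_def borel_sets_of_Int borel_sets_of_empty)
  moreover have "{\<sigma> \<in> topspace (simplices 1).
      P (sine_depth (\<sigma> (simplex_vertex 0))) (sine_depth (\<sigma> (simplex_vertex 1)))} = (\<Union>i. \<Union>j. B i j)"
    by (auto simp: B_def)
  ultimately show ?thesis by (simp add: borel_sets_of_UN)
qed

lemma singular_face_mem_deep_points:
  assumes "\<sigma> \<in> topspace (simplices 1)"
  shows "singular_face 1 0 \<sigma> \<in> deep_points k \<longleftrightarrow> k < sine_depth (\<sigma> (simplex_vertex 1))"
    and "singular_face 1 1 \<sigma> \<in> deep_points k \<longleftrightarrow> k < sine_depth (\<sigma> (simplex_vertex 0))"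
proof -
  have "\<sigma> (simplex_vertex j) \<in> warsaw" if "j \<le> 1" for j
    using assms simplex_vertex_in_standard_simplex[OF that]
    by (auto simp: topspace_compact_open_simplices singular_simplex_def continuous_map_def)
  from this[of 0] this[of 1]
  show "singular_face 1 0 \<sigma> \<in> deep_points k \<longleftrightarrow> k < sine_depth (\<sigma> (simplex_vertex 1))"
    and "singular_face 1 1 \<sigma> \<in> deep_points k \<longleftrightarrow> k < sine_depth (\<sigma> (simplex_vertex 0))"
    unfolding singular_face_1_eq_const_simplex deep_points_def
    by (auto simp: const_simplex_in_compact_open_simplices mem_sine_tail_iff_sine_depth)
qed

lemma mt_boundary_deep_points:
  assumes \<nu>: "finite_signed_borel_measure (simplices 1) \<nu>"
  shows "mt_boundary 1 (top_of_set warsaw) \<nu> (deep_points k)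
       = \<nu> {\<sigma> \<in> topspace (simplices 1).
              sine_depth (\<sigma> (simplex_vertex 0)) \<le> k \<and> k < sine_depth (\<sigma> (simplex_vertex 1))}
       - \<nu> {\<sigma> \<in> topspace (simplices 1).
              sine_depth (\<sigma> (simplex_vertex 1)) \<le> k \<and> k < sine_depth (\<sigma> (simplex_vertex 0))}"
    (is "_ = \<nu> ?up - \<nu> ?down")
proof -
  let ?both = "{\<sigma> \<in> topspace (simplices 1).
                 k < sine_depth (\<sigma> (simplex_vertex 0)) \<and> k < sine_depth (\<sigma> (simplex_vertex 1))}"
  have "{\<sigma> \<in> topspace (simplices 1). singular_face 1 0 \<sigma> \<in> deep_points k} = ?up \<union> ?both"
       "{\<sigma> \<in> topspace (simplices 1). singular_face 1 1 \<sigma> \<in> deep_points k} = ?down \<union> ?both"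
    using singular_face_mem_deep_points by auto
  moreover have "\<nu> (?up \<union> ?both) = \<nu> ?up + \<nu> ?both" "\<nu> (?down \<union> ?both) = \<nu> ?down + \<nu> ?both"
    by (rule finite_signed_borel_measure_Un[OF \<nu> sine_depth_vertices_borel sine_depth_vertices_borel]; auto)+
  ultimately show ?thesis
    by (simp add: mt_boundary_def mt_face_def deep_points_borel)
qed

text \<open>The key estimate: a boundary assigns summable masses to the deep points, because the
  depths at the two vertices of the 1-simplices in a compact carrier differ by a bounded amount.\<close>

lemma summable_mt_boundary_deep_points:
  assumes \<nu>: "\<nu> \<in> mt_chains 1 (top_of_set warsaw)"
  shows "summable (\<lambda>k. mt_boundary 1 (top_of_set warsaw) \<nu> (deep_points k))"
proof -
  let ?T = "simplices 1"
  define d0 where "d0 \<sigma> = sine_depth (\<sigma> (simplex_vertex 0))" for \<sigma> :: "(nat \<Rightarrow> real) \<Rightarrow> real \<times> real"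
  define d1 where "d1 \<sigma> = sine_depth (\<sigma> (simplex_vertex 1))" for \<sigma> :: "(nat \<Rightarrow> real) \<Rightarrow> real \<times> real"
  have fs: "finite_signed_borel_measure ?T \<nu>" using \<nu> by (simp add: mt_chains_def)
  obtain K where K: "compactin ?T K" "\<And>B. B \<in> borel_sets_of ?T \<Longrightarrow> B \<inter> K = {} \<Longrightarrow> \<nu> B = 0"
    using \<nu> unfolding mt_chains_def has_compact_carrier_def by blast
  obtain M where M: "\<And>\<sigma>. \<sigma> \<in> K \<Longrightarrow> d0 \<sigma> \<le> d1 \<sigma> + M \<and> d1 \<sigma> \<le> d0 \<sigma> + M"
    using sine_depth_bounded_on_compactin[OF K(1)] unfolding d0_def d1_def by blast
  have borel01: "{\<sigma> \<in> topspace ?T. P (d0 \<sigma>) (d1 \<sigma>)} \<in> borel_sets_of ?T" for P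
    unfolding d0_def d1_def by (rule sine_depth_vertices_borel)
  have borel10: "{\<sigma> \<in> topspace ?T. P (d1 \<sigma>) (d0 \<sigma>)} \<in> borel_sets_of ?T" for P
    using borel01[of "\<lambda>x y. P y x"] .
  have "summable (\<lambda>k. \<nu> {\<sigma> \<in> topspace ?T. d0 \<sigma> \<le> k \<and> k < d1 \<sigma>})"
    by (rule summable_signed_measure_bands[where K=K and a=d0 and b=d1 and M=M])
      (use fs K(2) borel01 M in auto)
  moreover have "summable (\<lambda>k. \<nu> {\<sigma> \<in> topspace ?T. d1 \<sigma> \<le> k \<and> k < d0 \<sigma>})"
    by (rule summable_signed_measure_bands[where K=K and a=d1 and b=d0 and M=M])
      (use fs K(2) borel10 M in auto)
  ultimately show ?thesis
    unfolding mt_boundary_deep_points[OF fs] d0_def d1_def by (rule summable_diff)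
qed

end

context warsaw_circle
begin

definition peak_point :: "nat \<Rightarrow> (nat \<Rightarrow> real) \<Rightarrow> real \<times> real" where
  "peak_point j = const_simplex (sine_point (peak_angle j))"

definition base_point :: "(nat \<Rightarrow> real) \<Rightarrow> real \<times> real" where
  "base_point = const_simplex (warsaw_xmin, -1)"

lemma peak_point_in_topspace: "peak_point j \<in> topspace (simplices 0)"
  unfolding peak_point_def using sine_point_mem_warsaw_sine_part[OF peak_angle_ge]
  by (auto intro: const_simplex_in_compact_open_simplices)

lemma base_point_in_topspace: "base_point \<in> topspace (simplices 0)"
  unfolding base_point_def using sine_point_mem_warsaw_sine_part[of "3 * pi / 2"]
  by (auto simp: sine_point_3pi_half intro: const_simplex_in_compact_open_simplices)

lemma peak_point_ne_base_point: "peak_point j \<noteq> base_point"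
  using const_simplex_vertex sin_peak_angle[of j]
  by (metis base_point_def peak_point_def sine_point_def snd_conv one_neq_neg_one)

lemma limitin_peak_point: "limitin (simplices 0) peak_point (const_simplex (0, 1)) sequentially"
  unfolding peak_point_def
  using sine_point_mem_warsaw_sine_part[OF peak_angle_ge] sine_point_peak_angle_limit
  by (intro limitin_const_simplex) (auto simp: warsaw_segment_def limitin_subtopology)

lemma peak_point_mem_deep_points: "peak_point j \<in> deep_points k \<longleftrightarrow> k \<le> j"
  using peak_point_in_topspace[of j]
  by (simp add: deep_points_def peak_point_def sine_point_peak_angle_mem_sine_tail)

lemma base_point_not_mem_deep_points: "base_point \<notin> deep_points k"
  using sine_tail_width_lt_warsaw_xmin[of k] by (simp add: deep_points_def base_point_def mem_sine_tail)

lemma bounded_on_peak_points: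
  assumes "continuous_map (simplices 0) euclideanreal f"
  shows "\<exists>B. \<forall>j. \<bar>f (peak_point j)\<bar> \<le> B"
proof -
  have "convergent (\<lambda>j. f (peak_point j))"
    using continuous_map_limit[OF assms limitin_peak_point] by (auto simp: convergent_def o_def)
  then show ?thesis using convergent_imp_Bseq Bseq_def by (metis real_norm_def)
qed

definition peak_chain :: "(nat \<Rightarrow> real) \<Rightarrow> ((nat \<Rightarrow> real) \<Rightarrow> real \<times> real) set \<Rightarrow> real" where
  "peak_chain w = (\<lambda>A. signed_measure_of (simplices 0) (point_masses (simplices 0) peak_point w) A
                     - signed_measure_of (simplices 0) (point_masses (simplices 0) (\<lambda>_. base_point) w) A)"

lemma peak_chain_apply:
  assumes w: "\<And>j. 0 \<le> w j" "summable w" and A: "A \<in> borel_sets_of (simplices 0)"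
  shows "peak_chain w A = suminf (\<lambda>j. w j * indicator A (peak_point j)) - suminf w * indicator A base_point"
  using A suminf_mult2[OF w(2), of "indicator A base_point"]
  by (simp add: peak_chain_def signed_measure_of_def measure_point_masses[OF _ w]
      peak_point_in_topspace base_point_in_topspace)

lemma peak_chain_mt_chains:
  assumes w: "\<And>j. 0 \<le> w j" "summable w"
  shows "peak_chain w \<in> mt_chains 0 (top_of_set warsaw)"
proof -
  have "finite_signed_borel_measure (simplices 0) (peak_chain w)"
    unfolding peak_chain_def
    using peak_point_in_topspace base_point_in_topspace w
    by (intro finite_signed_borel_measure_diff finite_signed_borel_measure_signed_measure_of
        finite_measure_point_masses) auto
  moreover have "has_compact_carrier (simplices 0) (peak_chain w)"
    unfolding has_compact_carrier_def
  proof (intro exI conjI ballI impI)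
    show "compactin (simplices 0) (insert (const_simplex (0, 1)) (range peak_point) \<union> {base_point})"
      using peak_point_in_topspace base_point_in_topspace
      by (intro compactin_Un compactin_sequence_with_limit[OF limitin_peak_point]) auto
    fix B assume "B \<in> borel_sets_of (simplices 0)"
      "B \<inter> (insert (const_simplex (0, 1)) (range peak_point) \<union> {base_point}) = {}"
    then have "peak_point j \<notin> B" "base_point \<notin> B" for j by auto
    then show "peak_chain w B = 0" by (simp add: peak_chain_apply[OF w \<open>B \<in> borel_sets_of (simplices 0)\<close>])
  qed
  ultimately show ?thesis by (simp add: mt_chains_def)
qed

lemma signed_integral_peak_chain:
  assumes w: "\<And>j. 0 \<le> w j" "summable w"
    and f: "continuous_map (simplices 0) euclideanreal f"
  shows "signed_integral (simplices 0) (peak_chain w) f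
       = suminf (\<lambda>j. w j * f (peak_point j)) - suminf w * f base_point"
proof -
  obtain B where B: "\<And>j. \<bar>f (peak_point j)\<bar> \<le> B" using bounded_on_peak_points[OF f] by blast
  note peaks = finite_measure_point_masses[OF peak_point_in_topspace w]
  note base = finite_measure_point_masses[OF base_point_in_topspace w]
  have base_borel: "{base_point} \<in> borel_sets_of (simplices 0)"
    by (intro singleton_borel_compact_open_simplices_0 t1_space_subtopology t1_space_euclidean
        base_point_in_topspace)
  have "measure (point_masses (simplices 0) peak_point w) {base_point} = 0"
    using peak_point_ne_base_point by (simp add: measure_point_masses[OF peak_point_in_topspace w base_borel])
  moreover have "measure (point_masses (simplices 0) (\<lambda>_. base_point) w) (topspace (simplices 0) - {base_point}) = 0"
    by (simp add: measure_point_masses[OF base_point_in_topspace w] borel_sets_of_compl[OF base_borel])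
  ultimately have "signed_integral (simplices 0) (peak_chain w) f
      = integral\<^sup>L (point_masses (simplices 0) peak_point w) f
      - integral\<^sup>L (point_masses (simplices 0) (\<lambda>_. base_point) w) f"
    unfolding peak_chain_def using peaks base base_borel by (intro signed_integral_measure_diff) auto
  also have "\<dots> = suminf (\<lambda>j. w j * f (peak_point j)) - suminf (\<lambda>j. w j * f base_point)"
  proof -
    have "summable (\<lambda>j. w j * \<bar>f (peak_point j)\<bar>)"
      by (rule summable_comparison_test[OF _ summable_mult2[OF w(2), of B]])
        (use w B in \<open>auto intro: mult_left_mono\<close>)
    then show ?thesis
      using integral_point_masses[OF peak_point_in_topspace w continuous_map_borel_measurable[OF f]]
        integral_point_masses[OF base_point_in_topspace w continuous_map_borel_measurable[OF f]
          summable_mult2[OF w(2)]]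
      by simp
  qed
  finally show ?thesis by (simp add: suminf_mult2[OF w(2)])
qed

end

context warsaw_circle
begin

text \<open>The 1-simplex running along the sine curve from the base point to the \<open>j\<close>-th peak.\<close>

definition peak_simplex :: "nat \<Rightarrow> (nat \<Rightarrow> real) \<Rightarrow> real \<times> real" where
  "peak_simplex j = restrict (\<lambda>x. sine_point (3 * pi / 2 + x 1 * (peak_angle j - 3 * pi / 2)))
                      (standard_simplex 1)"

lemma peak_simplex_in_topspace: "peak_simplex j \<in> topspace (simplices 1)"
proof -
  define \<gamma> where "\<gamma> t = sine_point (3 * pi / 2 + t * (peak_angle j - 3 * pi / 2))" for t
  have angle: "3 * pi / 2 \<le> 3 * pi / 2 + t * (peak_angle j - 3 * pi / 2)" if "t \<in> {0..1}" for t
    using that peak_angle_ge[of j] by simp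
  then have "3 * pi / 2 + t * (peak_angle j - 3 * pi / 2) \<noteq> 0" if "t \<in> {0..1}" for t
    using angle[OF that] pi_gt_zero by linarith
  then have "continuous_on {0..1} \<gamma>"
    unfolding \<gamma>_def sine_point_def by (intro continuous_intros) auto
  moreover have "\<gamma> ` {0..1} \<subseteq> warsaw"
    using sine_point_mem_warsaw_sine_part[OF angle] by (auto simp: \<gamma>_def)
  ultimately have "continuous_map (top_of_set {0..1}) (top_of_set warsaw) \<gamma>" by auto
  moreover have "continuous_map (simplex_space 1) (top_of_set {0..1}) (\<lambda>x. x 1)"
    by (auto simp: continuous_map_in_subtopology standard_simplex_def
        intro!: continuous_map_from_subtopology continuous_map_product_projection)
  ultimately have "continuous_map (simplex_space 1) (top_of_set warsaw) (\<gamma> \<circ> (\<lambda>x. x 1))"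
    by (intro continuous_map_compose)
  then have "continuous_map (simplex_space 1) (top_of_set warsaw) (peak_simplex j)"
    by (rule continuous_map_eq) (simp add: peak_simplex_def \<gamma>_def)
  then show ?thesis
    by (simp add: topspace_compact_open_simplices singular_simplex_def peak_simplex_def)
qed

lemma singular_face_peak_simplex:
  "singular_face 1 0 (peak_simplex j) = peak_point j"
  "singular_face 1 1 (peak_simplex j) = base_point"
  unfolding singular_face_1_eq_const_simplex peak_simplex_def peak_point_def base_point_def
  using simplex_vertex_in_standard_simplex[of 0 1] simplex_vertex_in_standard_simplex[of 1 1]
  by (simp_all add: simplex_vertex_def sine_point_3pi_half)

definition peak_path_chain :: "(nat \<Rightarrow> real) \<Rightarrow> ((nat \<Rightarrow> real) \<Rightarrow> real \<times> real) set \<Rightarrow> real" where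
  "peak_path_chain w = signed_measure_of (simplices 1) (point_masses (simplices 1) peak_simplex w)"

lemma peak_path_chain_apply:
  assumes "\<And>j. 0 \<le> w j" "summable w" "B \<in> borel_sets_of (simplices 1)"
  shows "peak_path_chain w B = suminf (\<lambda>j. w j * indicator B (peak_simplex j))"
  using assms(3) measure_point_masses[OF peak_simplex_in_topspace assms]
  by (simp add: peak_path_chain_def signed_measure_of_def)

lemma peak_path_chain_mt_chains:
  assumes w: "\<And>j. 0 \<le> w j" and support: "\<And>j. n \<le> j \<Longrightarrow> w j = 0"
  shows "peak_path_chain w \<in> mt_chains 1 (top_of_set warsaw)"
proof -
  have "summable w" using support by (intro summable_finite[of "{..<n}"]) auto
  note w = w this
  have "finite_signed_borel_measure (simplices 1) (peak_path_chain w)"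
    unfolding peak_path_chain_def
    by (intro finite_signed_borel_measure_signed_measure_of finite_measure_point_masses
        peak_simplex_in_topspace w) simp
  moreover have "has_compact_carrier (simplices 1) (peak_path_chain w)"
    unfolding has_compact_carrier_def
  proof (intro exI conjI ballI impI)
    show "compactin (simplices 1) (peak_simplex ` {..<n})"
      using peak_simplex_in_topspace by (intro finite_imp_compactin) auto
    fix B assume B: "B \<in> borel_sets_of (simplices 1)" "B \<inter> peak_simplex ` {..<n} = {}"
    then have "peak_simplex j \<notin> B" if "j < n" for j using that by blast
    then have "(\<lambda>j. w j * indicator B (peak_simplex j)) = (\<lambda>j. 0)"
      using support by (intro ext) (metis indicator_simps(2) mult_zero_left mult_zero_right not_le)
    then show "peak_path_chain w B = 0" using peak_path_chain_apply[OF w B(1)] by simp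
  qed
  ultimately show ?thesis by (simp add: mt_chains_def)
qed

lemma mt_boundary_peak_path_chain:
  assumes w: "\<And>j. 0 \<le> w j" "summable w"
  shows "mt_boundary 1 (top_of_set warsaw) (peak_path_chain w) = peak_chain w"
proof
  fix A
  show "mt_boundary 1 (top_of_set warsaw) (peak_path_chain w) A = peak_chain w A"
  proof (cases "A \<in> borel_sets_of (simplices 0)")
    case True
    have face: "{\<sigma> \<in> topspace (simplices 1). singular_face 1 i \<sigma> \<in> A} \<in> borel_sets_of (simplices 1)"
      if "i \<le> 1" for i
    proof -
      have "continuous_map (simplices 1) (simplices 0) (singular_face 1 i)"
        using continuous_map_singular_face[of 1 i "top_of_set warsaw"] that by simp
      then show ?thesis using True by (rule borel_sets_of_continuous_map_preimage)
    qed
    have indicator: "indicator {\<sigma> \<in> topspace (simplices 1). singular_face 1 i \<sigma> \<in> A} (peak_simplex j)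
        = (indicator A (singular_face 1 i (peak_simplex j)) :: real)" for i j
      using peak_simplex_in_topspace[of j] by (simp add: indicator_def)
    have "peak_path_chain w {\<sigma> \<in> topspace (simplices 1). singular_face 1 0 \<sigma> \<in> A}
        = suminf (\<lambda>j. w j * indicator A (peak_point j))"
      using peak_path_chain_apply[OF w face[of 0]] indicator[of 0] singular_face_peak_simplex by simp
    moreover have "peak_path_chain w {\<sigma> \<in> topspace (simplices 1). singular_face 1 1 \<sigma> \<in> A}
        = suminf w * indicator A base_point"
      using peak_path_chain_apply[OF w face[of 1]] indicator[of 1] singular_face_peak_simplex
        suminf_mult2[OF w(2), of "indicator A base_point"]
      by simp
    ultimately show ?thesis
      using True face[of 0] face[of 1] peak_chain_apply[OF w True]
      by (simp add: mt_boundary_def mt_face_def)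
  qed (simp add: mt_boundary_def mt_face_def peak_chain_def signed_measure_of_def)
qed

lemma peak_chain_mt_boundaries:
  assumes "\<And>j. 0 \<le> w j" and "\<And>j. n \<le> j \<Longrightarrow> w j = 0"
  shows "peak_chain w \<in> mt_boundaries 0 (top_of_set warsaw)"
proof -
  have "summable w" using assms(2) by (intro summable_finite[of "{..<n}"]) auto
  then show ?thesis
    using mt_boundary_peak_path_chain[OF assms(1)] peak_path_chain_mt_chains[OF assms]
    unfolding mt_boundaries_def by (intro image_eqI[where x="peak_path_chain w"]) simp_all
qed

abbreviation truncated_weight :: "nat \<Rightarrow> nat \<Rightarrow> real" where
  "truncated_weight n j \<equiv> if j < n then telescoping_weight j else 0"

lemma limitin_peak_chain_truncated:
  "limitin (berlanga_chains 0 (top_of_set warsaw)) (\<lambda>n. peak_chain (truncated_weight n))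
     (peak_chain telescoping_weight) sequentially"
proof (rule limitin_berlanga_chains)
  have w: "0 \<le> truncated_weight n j" "summable (truncated_weight n)" for n j
    using telescoping_weight_nonneg by (auto intro: summable_finite[of "{..<n}"])
  show "peak_chain (truncated_weight n) \<in> mt_chains 0 (top_of_set warsaw)" for n
    using w by (rule peak_chain_mt_chains)
  show "peak_chain telescoping_weight \<in> mt_chains 0 (top_of_set warsaw)"
    using telescoping_weight_nonneg sums_summable[OF telescoping_weight_sums] by (rule peak_chain_mt_chains)
  fix f assume f: "continuous_map (simplices 0) euclideanreal f"
  obtain B where B: "\<And>j. \<bar>f (peak_point j)\<bar> \<le> B" using bounded_on_peak_points[OF f] by blast
  have "summable (\<lambda>j. telescoping_weight j * f (peak_point j))"
    using B telescoping_weight_nonneg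
    by (intro summable_comparison_test[OF _ summable_mult2[OF sums_summable[OF telescoping_weight_sums], of B]])
      (auto simp: abs_mult intro: mult_left_mono)
  then have "(\<lambda>n. (\<Sum>j<n. telescoping_weight j * f (peak_point j)) - (\<Sum>j<n. telescoping_weight j) * f base_point)
      \<longlonglongrightarrow> suminf (\<lambda>j. telescoping_weight j * f (peak_point j)) - suminf telescoping_weight * f base_point"
    by (intro tendsto_diff tendsto_mult_right summable_LIMSEQ sums_summable[OF telescoping_weight_sums])
  moreover have "suminf (\<lambda>j. truncated_weight n j * g j) = (\<Sum>j<n. telescoping_weight j * g j)" for n g
    by (subst suminf_finite[of "{..<n}"]) auto
  ultimately show "(\<lambda>n. signed_integral (simplices 0) (peak_chain (truncated_weight n)) f)
      \<longlonglongrightarrow> signed_integral (simplices 0) (peak_chain telescoping_weight) f"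
    using signed_integral_peak_chain[OF w f] suminf_finite[of "{..<n}" "truncated_weight n" for n]
      signed_integral_peak_chain[OF telescoping_weight_nonneg sums_summable[OF telescoping_weight_sums] f]
    by (simp add: if_distrib cong: if_cong)
qed

lemma peak_chain_not_mt_boundaries:
  "peak_chain telescoping_weight \<notin> mt_boundaries 0 (top_of_set warsaw)"
proof
  assume "peak_chain telescoping_weight \<in> mt_boundaries 0 (top_of_set warsaw)"
  then obtain \<nu> where \<nu>: "\<nu> \<in> mt_chains 1 (top_of_set warsaw)"
    and "peak_chain telescoping_weight = mt_boundary 1 (top_of_set warsaw) \<nu>"
    by (auto simp: mt_boundaries_def)
  moreover have "peak_chain telescoping_weight (deep_points k) = 1 / (real k + 1)" for k
  proof -
    have "(\<lambda>j. telescoping_weight j * indicator (deep_points k) (peak_point j))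
        = (\<lambda>j. if k \<le> j then telescoping_weight j else 0)"
      by (auto simp: peak_point_mem_deep_points)
    then show ?thesis
      using peak_chain_apply[OF telescoping_weight_nonneg sums_summable[OF telescoping_weight_sums]
          deep_points_borel] base_point_not_mem_deep_points[of k]
        sums_unique[OF telescoping_weight_tail_sums[of k]]
      by simp
  qed
  ultimately show False
    using summable_mt_boundary_deep_points[OF \<nu>] not_summable_inverse_Suc by simp
qed

theorem not_Hausdorff_mt_homology_berlanga_0:
  "\<not> Hausdorff_space (mt_homology_berlanga 0 (top_of_set warsaw))"
  unfolding mt_homology_berlanga_def
proof (rule not_Hausdorff_space_quotient_topology)
  have cycles: "mt_cycles 0 (top_of_set warsaw) = mt_chains 0 (top_of_set warsaw)"
    by (simp add: mt_cycles_def)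
  have chains: "peak_chain telescoping_weight \<in> mt_chains 0 (top_of_set warsaw)"
    "peak_chain (truncated_weight n) \<in> mt_chains 0 (top_of_set warsaw)" for n
    using telescoping_weight_nonneg sums_summable[OF telescoping_weight_sums]
    by (auto intro!: peak_chain_mt_chains summable_finite[of "{..<n}"] split: if_splits)
  show "limitin (subtopology (berlanga_chains 0 (top_of_set warsaw)) (mt_cycles 0 (top_of_set warsaw)))
          (\<lambda>n. peak_chain (truncated_weight n)) (peak_chain telescoping_weight) sequentially"
    using limitin_peak_chain_truncated chains by (simp add: limitin_subtopology cycles)
  show "mt_class 0 (top_of_set warsaw) (peak_chain (truncated_weight n)) = mt_class 0 (top_of_set warsaw) (\<lambda>A. 0)"
    for n
    using chains telescoping_weight_nonneg
    by (simp add: mt_class_eq_zero_iff cycles peak_chain_mt_boundaries[of _ n])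
  show "mt_class 0 (top_of_set warsaw) (peak_chain telescoping_weight) \<noteq> mt_class 0 (top_of_set warsaw) (\<lambda>A. 0)"
    using chains peak_chain_not_mt_boundaries by (simp add: mt_class_eq_zero_iff cycles)
qed

end

theorem theorem6:
  fixes g :: "real \<Rightarrow> real \<times> real"
  assumes "arc g"
    and "pathstart g = (0, -1)"
    and "pathfinish g = (warsaw_xmin, -1)"
    and "path_image g \<inter> (warsaw_sine_part \<union> warsaw_segment) = {(0, -1), (warsaw_xmin, -1)}"
  shows "\<not> Hausdorff_space
           (mt_homology_berlanga 0
              (subtopology euclidean (warsaw_sine_part \<union> warsaw_segment \<union> path_image g)))"
proof -
  interpret warsaw_circle "path_image g"
  proof
    show "closed (path_image g)"
      using assms(1) by (intro compact_imp_closed compact_path_image arc_imp_path)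
    show "path_image g \<inter> warsaw_sine_part \<subseteq> {(warsaw_xmin, -1)}"
    proof
      fix p assume p: "p \<in> path_image g \<inter> warsaw_sine_part"
      then have "p \<in> {(0, -1), (warsaw_xmin, -1)}" using assms(4) by blast
      moreover have "fst p \<noteq> 0" using p by (auto simp: warsaw_sine_part_def)
      ultimately show "p \<in> {(warsaw_xmin, -1)}" by auto
    qed
  qed
  show ?thesis by (rule not_Hausdorff_mt_homology_berlanga_0)
qed

end
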